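(* An integral domain $D$ is a $\ast$-SH domain of type $2$ if and only if $D$ is a $\ast$-Krull domain.
   Context: $\ast$ is a star operation on $D$ of finite character. A $\ast$-ideal is a nonzero fractional ideal $I$ with $I^\ast=I$; it is of finite type if $I=J^\ast$ for some nonzero finitely generated $J$. A maximal $\ast$-ideal is an integral $\ast$-ideal maximal among proper integral $\ast$-ideals. A $\ast$-homog ideal is an integral $\ast$-ideal $I$ of finite type with $I\subsetneq D$ such that $(J+L)^{\ast}\neq D$ for every pair $J,L$ of proper integral $\ast$-ideals of finite type containing $I$; such $I$ lies in a unique maximal $\ast$-ideal $M(I)$. $D$ is a $\ast$-SH domain if every $xD$, $x$ a nonzero nonunit, is a $\ast$-product $(I_1\cdots I_n)^\ast$ of finitely many $\ast$-homog ideals. A $\ast$-homog ideal $I$ is of type $2$ if $I=((M(I))^n)^\ast$ for some positive integer $n$; $D$ is a $\ast$-SH domain of type $2$ if for every nonzero nonunit $x$, $xD$ is a $\ast$-product of finitely many $\ast$-homog ideals of type $2$. $D$ is a $\ast$-weakly Krull domain if it is a $\ast$-SH domain all of whose maximal $\ast$-ideals have height $1$; $D$ is a $\ast$-Krull domain if it is a $\ast$-weakly Krull domain such that $D_P$ is a rank-one discrete valuation domain for every maximal $\ast$-ideal $P$. *)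

theory Defs
  imports Main
begin

text \<open>An integral domain D is modelled as a subring of a field 'a which is
  its quotient field. Fractional ideals, star operations etc. live in 'a.\<close>

definition subdomain :: "('a::field) set \<Rightarrow> bool" where
  "subdomain D \<longleftrightarrow> 0 \<in> D \<and> 1 \<in> D \<and>
     (\<forall>x\<in>D. \<forall>y\<in>D. x + y \<in> D \<and> x * y \<in> D \<and> - x \<in> D)"

definition is_quotient_field :: "('a::field) set \<Rightarrow> bool" where
  "is_quotient_field D \<longleftrightarrow> (\<forall>x. \<exists>a\<in>D. \<exists>b\<in>D. b \<noteq> 0 \<and> x = a / b)"

definition is_unit_in :: "('a::field) set \<Rightarrow> 'a \<Rightarrow> bool" where
  "is_unit_in D x \<longleftrightarrow> x \<in> D \<and> (\<exists>y\<in>D. x * y = 1)"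

definition submod :: "('a::field) set \<Rightarrow> 'a set \<Rightarrow> bool" where
  "submod D I \<longleftrightarrow> 0 \<in> I \<and> (\<forall>x\<in>I. \<forall>y\<in>I. x + y \<in> I) \<and> (\<forall>d\<in>D. \<forall>x\<in>I. d * x \<in> I)"

definition frac_ideal :: "('a::field) set \<Rightarrow> 'a set \<Rightarrow> bool" where
  "frac_ideal D I \<longleftrightarrow> submod D I \<and> I \<noteq> {0} \<and> (\<exists>d\<in>D. d \<noteq> 0 \<and> (\<forall>x\<in>I. d * x \<in> D))"

definition principal :: "('a::field) set \<Rightarrow> 'a \<Rightarrow> 'a set" where
  "principal D x = {x * d | d. d \<in> D}"

definition generated :: "('a::field) set \<Rightarrow> 'a set \<Rightarrow> 'a set" where
  "generated D S = {\<Sum>s\<in>S. c s * s | c. \<forall>s\<in>S. c s \<in> D}"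

definition fg_frac_ideal :: "('a::field) set \<Rightarrow> 'a set \<Rightarrow> bool" where
  "fg_frac_ideal D J \<longleftrightarrow> frac_ideal D J \<and> (\<exists>S. finite S \<and> J = generated D S)"

definition smult :: "('a::field) \<Rightarrow> 'a set \<Rightarrow> 'a set" where
  "smult x I = (\<lambda>y. x * y) ` I"

definition star_operation :: "('a::field) set \<Rightarrow> ('a set \<Rightarrow> 'a set) \<Rightarrow> bool" where
  "star_operation D st \<longleftrightarrow>
     (\<forall>I. frac_ideal D I \<longrightarrow> frac_ideal D (st I)) \<and>
     (\<forall>x. x \<noteq> 0 \<longrightarrow> st (principal D x) = principal D x) \<and>
     (\<forall>x I. x \<noteq> 0 \<and> frac_ideal D I \<longrightarrow> st (smult x I) = smult x (st I)) \<and>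
     (\<forall>I. frac_ideal D I \<longrightarrow> I \<subseteq> st I) \<and>
     (\<forall>I J. frac_ideal D I \<and> frac_ideal D J \<and> I \<subseteq> J \<longrightarrow> st I \<subseteq> st J) \<and>
     (\<forall>I. frac_ideal D I \<longrightarrow> st (st I) = st I)"

definition finite_character :: "('a::field) set \<Rightarrow> ('a set \<Rightarrow> 'a set) \<Rightarrow> bool" where
  "finite_character D st \<longleftrightarrow>
     (\<forall>I. frac_ideal D I \<longrightarrow> st I = \<Union>{st J | J. fg_frac_ideal D J \<and> J \<subseteq> I})"

definition star_ideal :: "('a::field) set \<Rightarrow> ('a set \<Rightarrow> 'a set) \<Rightarrow> 'a set \<Rightarrow> bool" where
  "star_ideal D st I \<longleftrightarrow> frac_ideal D I \<and> st I = I"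

definition star_finite_type :: "('a::field) set \<Rightarrow> ('a set \<Rightarrow> 'a set) \<Rightarrow> 'a set \<Rightarrow> bool" where
  "star_finite_type D st I \<longleftrightarrow> star_ideal D st I \<and> (\<exists>J. fg_frac_ideal D J \<and> I = st J)"

definition integral_star_ideal :: "('a::field) set \<Rightarrow> ('a set \<Rightarrow> 'a set) \<Rightarrow> 'a set \<Rightarrow> bool" where
  "integral_star_ideal D st I \<longleftrightarrow> star_ideal D st I \<and> I \<subseteq> D"

definition max_star_ideal :: "('a::field) set \<Rightarrow> ('a set \<Rightarrow> 'a set) \<Rightarrow> 'a set \<Rightarrow> bool" where
  "max_star_ideal D st M \<longleftrightarrow> integral_star_ideal D st M \<and> M \<noteq> D \<and>
     (\<forall>J. integral_star_ideal D st J \<and> J \<noteq> D \<and> M \<subseteq> J \<longrightarrow> J = M)"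

definition set_plus :: "('a::field) set \<Rightarrow> 'a set \<Rightarrow> 'a set" where
  "set_plus I J = {x + y | x y. x \<in> I \<and> y \<in> J}"

definition ideal_prod :: "('a::field) set \<Rightarrow> 'a set \<Rightarrow> 'a set" where
  "ideal_prod I J = {\<Sum>i<(n::nat). a i * b i | n a b. \<forall>i<n. a i \<in> I \<and> b i \<in> J}"

definition prod_ideals :: "('a::field) set \<Rightarrow> 'a set list \<Rightarrow> 'a set" where
  "prod_ideals D Is = foldr ideal_prod Is D"

definition ideal_power :: "('a::field) set \<Rightarrow> 'a set \<Rightarrow> nat \<Rightarrow> 'a set" where
  "ideal_power D I n = (ideal_prod I ^^ n) D"

definition star_homog :: "('a::field) set \<Rightarrow> ('a set \<Rightarrow> 'a set) \<Rightarrow> 'a set \<Rightarrow> bool" where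
  "star_homog D st I \<longleftrightarrow> integral_star_ideal D st I \<and> star_finite_type D st I \<and> I \<noteq> D \<and>
     (\<forall>J L. integral_star_ideal D st J \<and> star_finite_type D st J \<and> J \<noteq> D \<and> I \<subseteq> J \<and>
            integral_star_ideal D st L \<and> star_finite_type D st L \<and> L \<noteq> D \<and> I \<subseteq> L
            \<longrightarrow> st (set_plus J L) \<noteq> D)"

text \<open>The unique maximal star-ideal containing a star-homog ideal.\<close>
definition M_of :: "('a::field) set \<Rightarrow> ('a set \<Rightarrow> 'a set) \<Rightarrow> 'a set \<Rightarrow> 'a set" where
  "M_of D st I = (THE M. max_star_ideal D st M \<and> I \<subseteq> M)"

definition star_SH :: "('a::field) set \<Rightarrow> ('a set \<Rightarrow> 'a set) \<Rightarrow> bool" where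
  "star_SH D st \<longleftrightarrow> (\<forall>x\<in>D. x \<noteq> 0 \<and> \<not> is_unit_in D x \<longrightarrow>
     (\<exists>Is. Is \<noteq> [] \<and> (\<forall>I\<in>set Is. star_homog D st I) \<and> principal D x = st (prod_ideals D Is)))"

definition star_homog_type2 :: "('a::field) set \<Rightarrow> ('a set \<Rightarrow> 'a set) \<Rightarrow> 'a set \<Rightarrow> bool" where
  "star_homog_type2 D st I \<longleftrightarrow> star_homog D st I \<and>
     (\<exists>n>0. I = st (ideal_power D (M_of D st I) n))"

definition star_SH_type2 :: "('a::field) set \<Rightarrow> ('a set \<Rightarrow> 'a set) \<Rightarrow> bool" where
  "star_SH_type2 D st \<longleftrightarrow> (\<forall>x\<in>D. x \<noteq> 0 \<and> \<not> is_unit_in D x \<longrightarrow>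
     (\<exists>Is. Is \<noteq> [] \<and> (\<forall>I\<in>set Is. star_homog_type2 D st I) \<and> principal D x = st (prod_ideals D Is)))"

definition prime_ideal :: "('a::field) set \<Rightarrow> 'a set \<Rightarrow> bool" where
  "prime_ideal D P \<longleftrightarrow> submod D P \<and> P \<subseteq> D \<and> P \<noteq> D \<and>
     (\<forall>x\<in>D. \<forall>y\<in>D. x * y \<in> P \<longrightarrow> x \<in> P \<or> y \<in> P)"

definition height_one :: "('a::field) set \<Rightarrow> 'a set \<Rightarrow> bool" where
  "height_one D P \<longleftrightarrow> prime_ideal D P \<and> P \<noteq> {0} \<and>
     (\<forall>Q. prime_ideal D Q \<and> Q \<subseteq> P \<longrightarrow> Q = {0} \<or> Q = P)"

definition star_weakly_Krull :: "('a::field) set \<Rightarrow> ('a set \<Rightarrow> 'a set) \<Rightarrow> bool" where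
  "star_weakly_Krull D st \<longleftrightarrow> star_SH D st \<and> (\<forall>P. max_star_ideal D st P \<longrightarrow> height_one D P)"

definition localization :: "('a::field) set \<Rightarrow> 'a set \<Rightarrow> 'a set" where
  "localization D P = {a / s | a s. a \<in> D \<and> s \<in> D \<and> s \<notin> P}"

text \<open>R (a subring of the field 'a, whose quotient field is 'a) is a rank-one
  discrete valuation domain: it is the valuation ring of a surjective
  Z-valued valuation on 'a.\<close>
definition is_DVR :: "('a::field) set \<Rightarrow> bool" where
  "is_DVR R \<longleftrightarrow> (\<exists>v :: 'a \<Rightarrow> int.
     (\<forall>x y. x \<noteq> 0 \<and> y \<noteq> 0 \<longrightarrow> v (x * y) = v x + v y) \<and>
     (\<forall>x y. x \<noteq> 0 \<and> y \<noteq> 0 \<and> x + y \<noteq> 0 \<longrightarrow> min (v x) (v y) \<le> v (x + y)) \<and>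
     (\<forall>n. \<exists>x. x \<noteq> 0 \<and> v x = n) \<and>
     R = {x. x = 0 \<or> 0 \<le> v x})"

definition star_Krull :: "('a::field) set \<Rightarrow> ('a set \<Rightarrow> 'a set) \<Rightarrow> bool" where
  "star_Krull D st \<longleftrightarrow> star_weakly_Krull D st \<and>
     (\<forall>P. max_star_ideal D st P \<longrightarrow> is_DVR (localization D P))"

end

theory Submission
  imports Defs
begin

text \<open>Fix a maximal \<open>\<star>\<close>-ideal \<open>P\<close>. If \<open>D\<close> is \<open>\<star>\<close>-SH of type 2, every \<open>xD\<close> is a
  \<open>\<star>\<close>-product of powers of maximal \<open>\<star>\<close>-ideals, so \<open>xD = (P\<^sup>e A)\<^sup>\<star>\<close> with \<open>A \<not>\<subseteq> P\<close>.
  Taking \<open>x \<in> P\<close> shows that \<open>P\<close> is \<open>\<star>\<close>-invertible, hence \<open>\<star>\<close>-cancellable, so \<open>e\<close> is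
  determined by \<open>x\<close>. This exponent is a discrete valuation whose ring is \<open>D\<^sub>P\<close>, and
  a nonzero prime inside \<open>P\<close> must then contain a power of every element of \<open>P\<close>.

  Conversely, in a \<open>\<star>\<close>-Krull domain each \<open>\<star>\<close>-homog factor \<open>I\<close> of \<open>xD\<close> is
  \<open>\<star>\<close>-invertible with some inverse \<open>Q\<close>. With \<open>v\<close> the valuation of \<open>D\<^sub>P\<close>, \<open>P = M(I)\<close>,
  and \<open>n = v(a)\<close> for some \<open>a \<in> I\<close> with \<open>v(a) = -v(q)\<close>, \<open>q \<in> Q\<close>, one gets
  \<open>P\<^sup>n \<subseteq> I\<close> and \<open>(P\<^sup>n Q)\<^sup>\<star> = D\<close>; uniqueness of \<open>\<star>\<close>-inverses gives \<open>I = (P\<^sup>n)\<^sup>\<star>\<close>.\<close>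

locale frac_ideals =
  fixes D :: "'a::field set"
  assumes subdomain: "subdomain D"
begin

lemma zero_mem: "0 \<in> D" and one_mem: "1 \<in> D"
  and add_mem: "x \<in> D \<Longrightarrow> y \<in> D \<Longrightarrow> x + y \<in> D"
  and mult_mem: "x \<in> D \<Longrightarrow> y \<in> D \<Longrightarrow> x * y \<in> D"
  using subdomain unfolding subdomain_def by auto

lemma power_mem: "x \<in> D \<Longrightarrow> x ^ n \<in> D"
  by (induction n) (auto intro: mult_mem one_mem)

lemma submod_carrier: "submod D D"
  unfolding submod_def using zero_mem add_mem mult_mem by auto

lemma submod_zero: "submod D I \<Longrightarrow> 0 \<in> I"
  and submod_add: "submod D I \<Longrightarrow> x \<in> I \<Longrightarrow> y \<in> I \<Longrightarrow> x + y \<in> I"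
  and submod_mult_left: "submod D I \<Longrightarrow> d \<in> D \<Longrightarrow> x \<in> I \<Longrightarrow> d * x \<in> I"
  unfolding submod_def by auto

lemma submod_mult_right: "submod D I \<Longrightarrow> d \<in> D \<Longrightarrow> x \<in> I \<Longrightarrow> x * d \<in> I"
  using submod_mult_left by (metis mult.commute)

lemma submod_sum_lessThan:
  "submod D I \<Longrightarrow> (\<And>i. i < n \<Longrightarrow> f i \<in> I) \<Longrightarrow> (\<Sum>i<(n::nat). f i) \<in> I"
  by (induction n) (auto intro: submod_zero submod_add)

lemma submod_sum:
  assumes "submod D I" "finite S" "\<And>s. s \<in> S \<Longrightarrow> f s \<in> I"
  shows "sum f S \<in> I"
  using assms(2,3)
  by (induction S rule: finite_induct) (auto intro: submod_zero[OF assms(1)] submod_add[OF assms(1)])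

lemma submod_eq_carrier_if_one: "submod D I \<Longrightarrow> I \<subseteq> D \<Longrightarrow> 1 \<in> I \<Longrightarrow> I = D"
  using submod_mult_left[of I _ 1] by auto

lemma prime_ideal_power_mem: "prime_ideal D P \<Longrightarrow> x \<in> D \<Longrightarrow> x ^ n \<in> P \<Longrightarrow> x \<in> P"
proof (induction n)
  case 0
  then have "x * 1 \<in> P" unfolding prime_ideal_def submod_def by (metis power_0)
  then show ?case by simp
next
  case (Suc n)
  then show ?case unfolding prime_ideal_def using power_mem by (metis power_Suc)
qed

lemma ideal_prod_sum_mem:
  "(\<forall>i<n. f i \<in> A \<and> g i \<in> B) \<Longrightarrow> (\<Sum>i<(n::nat). f i * g i) \<in> ideal_prod A B"
  unfolding ideal_prod_def
  by (rule CollectI, rule exI[of _ n], rule exI[of _ f], rule exI[of _ g]) simp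

lemma ideal_prod_mult_mem: "a \<in> A \<Longrightarrow> b \<in> B \<Longrightarrow> a * b \<in> ideal_prod A B"
  using ideal_prod_sum_mem[of 1 "\<lambda>_. a" A "\<lambda>_. b" B] by simp

lemma ideal_prod_subset:
  "submod D C \<Longrightarrow> (\<And>a b. a \<in> A \<Longrightarrow> b \<in> B \<Longrightarrow> a * b \<in> C) \<Longrightarrow> ideal_prod A B \<subseteq> C"
  unfolding ideal_prod_def by (auto intro!: submod_sum_lessThan)

lemma ideal_prod_add_mult:
  assumes "x \<in> ideal_prod A B" "a \<in> A" "b \<in> B"
  shows "x + a * b \<in> ideal_prod A B"
proof -
  obtain n :: nat and f g where x: "x = (\<Sum>i<n. f i * g i)" "\<forall>i<n. f i \<in> A \<and> g i \<in> B"
    using assms(1) unfolding ideal_prod_def by blast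
  have "x + a * b = (\<Sum>i<Suc n. (f(n:=a)) i * (g(n:=b)) i)"
    using x(1) by (simp add: sum.lessThan_Suc)
  moreover have "\<forall>i<Suc n. (f(n:=a)) i \<in> A \<and> (g(n:=b)) i \<in> B"
    using x(2) assms by (auto simp: less_Suc_eq)
  ultimately show ?thesis using ideal_prod_sum_mem[of "Suc n" "f(n:=a)" A "g(n:=b)" B] by simp
qed

lemma ideal_prod_add:
  assumes "x \<in> ideal_prod A B" "y \<in> ideal_prod A B"
  shows "x + y \<in> ideal_prod A B"
proof -
  obtain n :: nat and f g where y: "y = (\<Sum>i<n. f i * g i)" "\<forall>i<n. f i \<in> A \<and> g i \<in> B"
    using assms(2) unfolding ideal_prod_def by blast
  have "m \<le> n \<Longrightarrow> x + (\<Sum>i<m. f i * g i) \<in> ideal_prod A B" for m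
  proof (induction m)
    case 0
    then show ?case using assms(1) by simp
  next
    case (Suc m)
    then have "x + (\<Sum>i<m. f i * g i) + f m * g m \<in> ideal_prod A B"
      using y(2) by (intro ideal_prod_add_mult) auto
    then show ?case by (simp add: add.assoc)
  qed
  then show ?thesis using y(1) by auto
qed

lemma submod_ideal_prod: assumes "submod D A" shows "submod D (ideal_prod A B)"
  unfolding submod_def
proof (intro conjI ballI)
  show "0 \<in> ideal_prod A B" using ideal_prod_sum_mem[of 0] by simp
  show "x + y \<in> ideal_prod A B" if "x \<in> ideal_prod A B" "y \<in> ideal_prod A B" for x y
    using ideal_prod_add that .
  fix d x assume d: "d \<in> D" and "x \<in> ideal_prod A B"
  then obtain n :: nat and f g where x: "x = (\<Sum>i<n. f i * g i)" "\<forall>i<n. f i \<in> A \<and> g i \<in> B"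
    unfolding ideal_prod_def by blast
  have "d * x = (\<Sum>i<n. (d * f i) * g i)"
    using x(1) by (simp add: sum_distrib_left mult.assoc)
  moreover have "\<forall>i<n. d * f i \<in> A \<and> g i \<in> B"
    using x(2) assms d submod_mult_left by blast
  ultimately show "d * x \<in> ideal_prod A B" using ideal_prod_sum_mem[of n "\<lambda>i. d * f i" A g B] by simp
qed

lemma ideal_prod_commute_subset: "ideal_prod A B \<subseteq> ideal_prod B A"
proof
  fix x assume "x \<in> ideal_prod A B"
  then obtain n :: nat and f g where x: "x = (\<Sum>i<n. f i * g i)" "\<forall>i<n. f i \<in> A \<and> g i \<in> B"
    unfolding ideal_prod_def by blast
  have "x = (\<Sum>i<n. g i * f i)" using x(1) by (simp add: mult.commute)
  then show "x \<in> ideal_prod B A" using ideal_prod_sum_mem[of n g B f A] x(2) by simp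
qed

lemma ideal_prod_commute: "ideal_prod A B = ideal_prod B A"
  using ideal_prod_commute_subset by blast

lemma ideal_prod_mono: "A \<subseteq> A' \<Longrightarrow> B \<subseteq> B' \<Longrightarrow> ideal_prod A B \<subseteq> ideal_prod A' B'"
  unfolding ideal_prod_def by blast

lemma ideal_prod_assoc_subset:
  assumes "submod D A"
  shows "ideal_prod (ideal_prod A B) C \<subseteq> ideal_prod A (ideal_prod B C)"
proof (rule ideal_prod_subset[OF submod_ideal_prod[OF assms]])
  fix x c assume "x \<in> ideal_prod A B" "c \<in> C"
  then obtain n :: nat and f g where x: "x = (\<Sum>i<n. f i * g i)" "\<forall>i<n. f i \<in> A \<and> g i \<in> B"
    unfolding ideal_prod_def by blast
  have "x * c = (\<Sum>i<n. f i * (g i * c))"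
    using x(1) by (simp add: sum_distrib_right mult.assoc)
  also have "\<dots> \<in> ideal_prod A (ideal_prod B C)"
    using x(2) \<open>c \<in> C\<close> by (intro ideal_prod_sum_mem) (auto intro: ideal_prod_mult_mem)
  finally show "x * c \<in> ideal_prod A (ideal_prod B C)" .
qed

lemma ideal_prod_assoc:
  assumes "submod D A" "submod D C"
  shows "ideal_prod (ideal_prod A B) C = ideal_prod A (ideal_prod B C)"
  using ideal_prod_assoc_subset[OF assms(1), of B C] ideal_prod_assoc_subset[OF assms(2), of B A]
  by (auto simp: ideal_prod_commute)

lemma ideal_prod_left_commute:
  assumes "submod D A" "submod D B" "submod D C"
  shows "ideal_prod A (ideal_prod B C) = ideal_prod B (ideal_prod A C)"
  using ideal_prod_assoc[OF assms(1,3), of B] ideal_prod_assoc[OF assms(2,3), of A]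
  by (simp add: ideal_prod_commute)

lemma ideal_prod_carrier_right: assumes "submod D A" shows "ideal_prod A D = A"
proof
  show "ideal_prod A D \<subseteq> A"
    by (rule ideal_prod_subset[OF assms]) (use assms submod_mult_right in auto)
  show "A \<subseteq> ideal_prod A D"
  proof
    fix a assume "a \<in> A"
    then have "a * 1 \<in> ideal_prod A D" using ideal_prod_mult_mem one_mem by blast
    then show "a \<in> ideal_prod A D" by simp
  qed
qed

lemma ideal_prod_carrier_left: "submod D A \<Longrightarrow> ideal_prod D A = A"
  using ideal_prod_carrier_right ideal_prod_commute[of D A] by simp

lemma ideal_prod_subset_carrier: "A \<subseteq> D \<Longrightarrow> B \<subseteq> D \<Longrightarrow> ideal_prod A B \<subseteq> D"
  by (rule ideal_prod_subset[OF submod_carrier]) (use mult_mem in blast)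

lemma smult_iff: "y \<in> smult c A \<longleftrightarrow> (\<exists>a\<in>A. y = c * a)"
  unfolding smult_def by auto

lemma ideal_prod_smult_right:
  assumes "c \<noteq> 0"
  shows "ideal_prod A (smult c B) = smult c (ideal_prod A B)"
proof
  show "ideal_prod A (smult c B) \<subseteq> smult c (ideal_prod A B)"
  proof
    fix x assume "x \<in> ideal_prod A (smult c B)"
    then obtain n :: nat and f g
      where x: "x = (\<Sum>i<n. f i * g i)" "\<forall>i<n. f i \<in> A \<and> g i \<in> smult c B"
      unfolding ideal_prod_def by blast
    have "\<forall>i<n. g i / c \<in> B" using x(2) assms by (auto simp: smult_iff)
    then have "(\<Sum>i<n. f i * (g i / c)) \<in> ideal_prod A B"
      using x(2) by (intro ideal_prod_sum_mem) auto
    moreover have "x = c * (\<Sum>i<n. f i * (g i / c))"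
      using x(1) assms by (simp add: sum_distrib_left)
    ultimately show "x \<in> smult c (ideal_prod A B)" by (auto simp: smult_iff)
  qed
  show "smult c (ideal_prod A B) \<subseteq> ideal_prod A (smult c B)"
  proof
    fix x assume "x \<in> smult c (ideal_prod A B)"
    then obtain n :: nat and f g
      where x: "x = c * (\<Sum>i<n. f i * g i)" "\<forall>i<n. f i \<in> A \<and> g i \<in> B"
      unfolding ideal_prod_def smult_def by auto
    have "x = (\<Sum>i<n. f i * (c * g i))"
      using x(1) by (simp add: sum_distrib_left mult.left_commute)
    moreover have "\<forall>i<n. f i \<in> A \<and> c * g i \<in> smult c B"
      using x(2) by (auto simp: smult_iff)
    ultimately show "x \<in> ideal_prod A (smult c B)"
      using ideal_prod_sum_mem[of n f A "\<lambda>i. c * g i" "smult c B"] by simp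
  qed
qed

lemma smult_subset_ideal_prod: "a \<in> A \<Longrightarrow> smult a B \<subseteq> ideal_prod A B"
  by (auto simp: smult_iff intro: ideal_prod_mult_mem)

lemma principal_iff: "y \<in> principal D x \<longleftrightarrow> (\<exists>d\<in>D. y = x * d)"
  unfolding principal_def by blast

lemma submod_principal: "x \<in> D \<Longrightarrow> submod D (principal D x)"
  unfolding submod_def
proof (intro conjI ballI)
  show "0 \<in> principal D x" unfolding principal_iff using zero_mem by force
next
  fix a b assume "a \<in> principal D x" "b \<in> principal D x"
  then obtain d e where "a = x * d" "b = x * e" "d \<in> D" "e \<in> D" unfolding principal_iff by blast
  then show "a + b \<in> principal D x" unfolding principal_iff
    using add_mem by (intro bexI[of _ "d + e"]) (auto simp: distrib_left)
next
  fix a b assume "a \<in> D" "b \<in> principal D x"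
  then obtain e where "b = x * e" "e \<in> D" unfolding principal_iff by blast
  then show "a * b \<in> principal D x" unfolding principal_iff
    using mult_mem \<open>a \<in> D\<close> by (intro bexI[of _ "a * e"]) auto
qed

lemma mem_principal_self: "x \<in> principal D x"
  unfolding principal_iff using one_mem by force

lemma principal_subset: "x \<in> D \<Longrightarrow> principal D x \<subseteq> D"
  using mult_mem by (auto simp: principal_iff)

lemma principal_one: "principal D 1 = D"
  unfolding principal_def by auto

lemma smult_principal: "smult c (principal D x) = principal D (c * x)"
proof
  show "smult c (principal D x) \<subseteq> principal D (c * x)"
  proof
    fix y assume "y \<in> smult c (principal D x)"
    then obtain d where "d \<in> D" "y = c * (x * d)" by (auto simp: smult_iff principal_iff)
    then show "y \<in> principal D (c * x)" unfolding principal_iff by (auto simp: mult.assoc)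
  qed
  show "principal D (c * x) \<subseteq> smult c (principal D x)"
  proof
    fix y assume "y \<in> principal D (c * x)"
    then obtain d where "d \<in> D" "y = c * (x * d)" by (auto simp: principal_iff mult.assoc)
    moreover have "x * d \<in> principal D x" using \<open>d \<in> D\<close> unfolding principal_iff by auto
    ultimately show "y \<in> smult c (principal D x)" unfolding smult_iff by blast
  qed
qed

lemma principal_mult:
  assumes "x \<in> D" "y \<in> D"
  shows "ideal_prod (principal D x) (principal D y) = principal D (x * y)"
proof
  show "ideal_prod (principal D x) (principal D y) \<subseteq> principal D (x * y)"
  proof (rule ideal_prod_subset[OF submod_principal])
    show "x * y \<in> D" using mult_mem assms by auto
    fix a b assume "a \<in> principal D x" "b \<in> principal D y"
    then obtain d e where "d \<in> D" "e \<in> D" "a = x * d" "b = y * e"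
      unfolding principal_iff by blast
    then show "a * b \<in> principal D (x * y)"
      unfolding principal_iff using mult_mem by (intro bexI[of _ "d * e"]) (auto simp: ac_simps)
  qed
  show "principal D (x * y) \<subseteq> ideal_prod (principal D x) (principal D y)"
  proof
    fix z assume "z \<in> principal D (x * y)"
    then obtain d where "d \<in> D" "z = (x * d) * y" unfolding principal_iff by (auto simp: ac_simps)
    moreover have "x * d \<in> principal D x" using \<open>d \<in> D\<close> unfolding principal_iff by auto
    ultimately show "z \<in> ideal_prod (principal D x) (principal D y)"
      using ideal_prod_mult_mem mem_principal_self by metis
  qed
qed

lemma set_plus_iff: "x \<in> set_plus A B \<longleftrightarrow> (\<exists>a\<in>A. \<exists>b\<in>B. x = a + b)"
  unfolding set_plus_def by blast

lemma submod_set_plus: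
  assumes "submod D A" "submod D B"
  shows "submod D (set_plus A B)"
  unfolding submod_def
proof (intro conjI ballI)
  show "0 \<in> set_plus A B" unfolding set_plus_iff using submod_zero assms by force
next
  fix x y assume "x \<in> set_plus A B" "y \<in> set_plus A B"
  then obtain a b a' b' where "a \<in> A" "b \<in> B" "a' \<in> A" "b' \<in> B" "x = a + b" "y = a' + b'"
    unfolding set_plus_iff by blast
  then show "x + y \<in> set_plus A B" unfolding set_plus_iff using submod_add assms
    by (intro bexI[of _ "a + a'"] bexI[of _ "b + b'"]) (auto simp: ac_simps)
next
  fix d x assume "d \<in> D" "x \<in> set_plus A B"
  then obtain a b where "a \<in> A" "b \<in> B" "x = a + b" unfolding set_plus_iff by blast
  then show "d * x \<in> set_plus A B" unfolding set_plus_iff using submod_mult_left assms \<open>d \<in> D\<close>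
    by (intro bexI[of _ "d * a"] bexI[of _ "d * b"]) (auto simp: distrib_left)
qed

lemma set_plus_upper_left: "submod D B \<Longrightarrow> A \<subseteq> set_plus A B"
  unfolding set_plus_def using submod_zero by force

lemma set_plus_upper_right: "submod D A \<Longrightarrow> B \<subseteq> set_plus A B"
  unfolding set_plus_def using submod_zero by force

lemma set_plus_subset_carrier: "A \<subseteq> D \<Longrightarrow> B \<subseteq> D \<Longrightarrow> set_plus A B \<subseteq> D"
  unfolding set_plus_def using add_mem by auto

lemma generated_iff: "x \<in> generated D S \<longleftrightarrow> (\<exists>c. (\<forall>s\<in>S. c s \<in> D) \<and> x = (\<Sum>s\<in>S. c s * s))"
  unfolding generated_def by blast

lemma submod_generated: "submod D (generated D S)"
  unfolding submod_def
proof (intro conjI ballI)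
  show "0 \<in> generated D S" unfolding generated_iff using zero_mem by (intro exI[of _ "\<lambda>_. 0"]) auto
next
  fix x y assume "x \<in> generated D S" "y \<in> generated D S"
  then obtain c e where "\<forall>s\<in>S. c s \<in> D" "x = (\<Sum>s\<in>S. c s * s)" "\<forall>s\<in>S. e s \<in> D" "y = (\<Sum>s\<in>S. e s * s)"
    unfolding generated_iff by blast
  then show "x + y \<in> generated D S" unfolding generated_iff using add_mem
    by (intro exI[of _ "\<lambda>s. c s + e s"]) (auto simp: sum.distrib distrib_right)
next
  fix d x assume "d \<in> D" "x \<in> generated D S"
  then obtain c where "\<forall>s\<in>S. c s \<in> D" "x = (\<Sum>s\<in>S. c s * s)" unfolding generated_iff by blast
  then show "d * x \<in> generated D S" unfolding generated_iff using mult_mem \<open>d \<in> D\<close>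
    by (intro exI[of _ "\<lambda>s. d * c s"]) (auto simp: sum_distrib_left mult.assoc)
qed

lemma generators_subset_generated: assumes "finite S" shows "S \<subseteq> generated D S"
proof
  fix t assume t: "t \<in> S"
  have "(\<Sum>s\<in>S. (if s = t then 1 else 0) * s) = (\<Sum>s\<in>S. if s = t then s else 0)"
    by (rule sum.cong) auto
  also have "\<dots> = t" using assms t by (simp add: sum.delta')
  finally show "t \<in> generated D S" unfolding generated_iff using zero_mem one_mem
    by (intro exI[of _ "\<lambda>s. if s = t then 1 else 0"]) auto
qed

lemma generated_least:
  assumes "finite S" "submod D C" "S \<subseteq> C"
  shows "generated D S \<subseteq> C"
proof
  fix x assume "x \<in> generated D S"
  then obtain c where "\<forall>s\<in>S. c s \<in> D" "x = (\<Sum>s\<in>S. c s * s)" unfolding generated_iff by blast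
  then show "x \<in> C"
    using assms by (auto intro!: submod_sum[OF assms(2,1)] submod_mult_left[OF assms(2)])
qed

lemma submod_Union_chain:
  assumes C: "C \<noteq> {}" "subset.chain \<A> C" and sm: "\<And>X. X \<in> C \<Longrightarrow> submod D X"
  shows "submod D (\<Union>C)"
  unfolding submod_def
proof (intro conjI ballI)
  obtain X0 where "X0 \<in> C" using C(1) by blast
  then show "0 \<in> \<Union>C" using submod_zero[OF sm] by blast
next
  fix x y assume "x \<in> \<Union>C" "y \<in> \<Union>C"
  then obtain X Y where XY: "X \<in> C" "Y \<in> C" "x \<in> X" "y \<in> Y" by blast
  moreover have "X \<subseteq> Y \<or> Y \<subseteq> X" using C(2) XY(1,2) unfolding subset_chain_def by blast
  ultimately show "x + y \<in> \<Union>C" using sm submod_add by blast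
next
  fix d x assume "d \<in> D" "x \<in> \<Union>C"
  then show "d * x \<in> \<Union>C" using sm submod_mult_left by blast
qed

lemma frac_ideal_submod: "frac_ideal D I \<Longrightarrow> submod D I"
  unfolding frac_ideal_def by auto

lemma frac_ideal_nonzero_mem: "frac_ideal D I \<Longrightarrow> \<exists>a\<in>I. a \<noteq> 0"
  unfolding frac_ideal_def using submod_zero by blast

lemma frac_ideal_denominator: "frac_ideal D I \<Longrightarrow> \<exists>d\<in>D. d \<noteq> 0 \<and> (\<forall>x\<in>I. d * x \<in> D)"
  unfolding frac_ideal_def by auto

lemma frac_idealI:
  "submod D I \<Longrightarrow> a \<in> I \<Longrightarrow> a \<noteq> 0 \<Longrightarrow> d \<in> D \<Longrightarrow> d \<noteq> 0 \<Longrightarrow> (\<forall>x\<in>I. d * x \<in> D) \<Longrightarrow> frac_ideal D I"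
  unfolding frac_ideal_def by (metis singletonD)

lemma frac_ideal_integralI: "submod D I \<Longrightarrow> I \<subseteq> D \<Longrightarrow> a \<in> I \<Longrightarrow> a \<noteq> 0 \<Longrightarrow> frac_ideal D I"
  using frac_idealI[of I a 1] one_mem by auto

lemma frac_ideal_carrier: "frac_ideal D D"
  using frac_ideal_integralI[OF submod_carrier] one_mem by auto

lemma frac_ideal_principal: "x \<in> D \<Longrightarrow> x \<noteq> 0 \<Longrightarrow> frac_ideal D (principal D x)"
  using frac_ideal_integralI[OF submod_principal principal_subset mem_principal_self] by auto

lemma frac_ideal_set_plus:
  assumes "frac_ideal D A" "frac_ideal D B" "A \<subseteq> D" "B \<subseteq> D"
  shows "frac_ideal D (set_plus A B)"
proof -
  obtain a where "a \<in> A" "a \<noteq> 0" using frac_ideal_nonzero_mem assms by blast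
  then show ?thesis
    using frac_ideal_integralI[OF submod_set_plus set_plus_subset_carrier, of A B a] assms
      frac_ideal_submod set_plus_upper_left[of B A]
    by auto
qed

lemma frac_ideal_prod:
  assumes "frac_ideal D A" "frac_ideal D B"
  shows "frac_ideal D (ideal_prod A B)"
proof -
  obtain a b where ab: "a \<in> A" "a \<noteq> 0" "b \<in> B" "b \<noteq> 0"
    using frac_ideal_nonzero_mem assms by blast
  obtain d e where de: "d \<in> D" "d \<noteq> 0" "\<forall>x\<in>A. d * x \<in> D" "e \<in> D" "e \<noteq> 0" "\<forall>x\<in>B. e * x \<in> D"
    using frac_ideal_denominator assms by meson
  have "ideal_prod A B \<subseteq> {x. d * e * x \<in> D}"
  proof (rule ideal_prod_subset)
    show "submod D {x. d * e * x \<in> D}"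
      unfolding submod_def using zero_mem add_mem mult_mem
      by (auto simp: distrib_left mult.left_commute)
    fix x y assume "x \<in> A" "y \<in> B"
    then have "(d * x) * (e * y) \<in> D" using de mult_mem by auto
    then show "x * y \<in> {x. d * e * x \<in> D}" by (simp add: ac_simps)
  qed
  moreover have "a * b \<in> ideal_prod A B" "a * b \<noteq> 0" "d * e \<in> D" "d * e \<noteq> 0"
    using ideal_prod_mult_mem ab de mult_mem by auto
  ultimately show ?thesis
    using frac_idealI[OF submod_ideal_prod[where B = B, OF frac_ideal_submod[OF assms(1)]],
        where a = "a * b" and d = "d * e"]
    by blast
qed

lemma submod_smult: assumes "submod D A" shows "submod D (smult c A)"
  unfolding submod_def
proof (intro conjI ballI)
  show "0 \<in> smult c A" unfolding smult_iff using submod_zero[OF assms] by force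
next
  fix a b assume "a \<in> smult c A" "b \<in> smult c A"
  then obtain d e where "a = c * d" "b = c * e" "d \<in> A" "e \<in> A" unfolding smult_iff by blast
  then show "a + b \<in> smult c A" unfolding smult_iff using submod_add[OF assms]
    by (intro bexI[of _ "d + e"]) (auto simp: distrib_left)
next
  fix a b assume "a \<in> D" "b \<in> smult c A"
  then obtain e where "b = c * e" "e \<in> A" unfolding smult_iff by blast
  then show "a * b \<in> smult c A" unfolding smult_iff using submod_mult_left[OF assms] \<open>a \<in> D\<close>
    by (intro bexI[of _ "a * e"]) (auto simp: ac_simps)
qed

text \<open>The scalar is only required to be a fraction with denominator \<open>w\<close>, which covers
  both \<open>c \<in> D\<close> (take \<open>w = 1\<close>) and \<open>c = 1 / x\<close> (take \<open>w = x\<close>).\<close>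
lemma frac_ideal_smult:
  assumes "frac_ideal D A" "c \<noteq> 0" "w \<in> D" "w \<noteq> 0" "w * c \<in> D"
  shows "frac_ideal D (smult c A)"
proof -
  obtain a where a: "a \<in> A" "a \<noteq> 0" using frac_ideal_nonzero_mem assms by blast
  obtain d where d: "d \<in> D" "d \<noteq> 0" "\<forall>x\<in>A. d * x \<in> D"
    using frac_ideal_denominator assms by meson
  have "(w * d) * (c * y) \<in> D" if "y \<in> A" for y
    using mult_mem[OF assms(5) d(3)[rule_format, OF that]] by (simp add: ac_simps)
  then have "\<forall>x\<in>smult c A. (w * d) * x \<in> D" by (auto simp: smult_iff)
  moreover have "c * a \<in> smult c A" "c * a \<noteq> 0" using a assms by (auto simp: smult_iff)
  ultimately show ?thesis
    using frac_idealI[OF submod_smult[OF frac_ideal_submod[OF assms(1)]], where a = "c * a" and d = "w * d"]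
      d assms mult_mem
    by auto
qed


lemma ideal_power_0: "ideal_power D A 0 = D"
  unfolding ideal_power_def by simp

lemma ideal_power_Suc: "ideal_power D A (Suc n) = ideal_prod A (ideal_power D A n)"
  unfolding ideal_power_def by simp

lemma frac_ideal_ideal_power:
  assumes "frac_ideal D A" "A \<subseteq> D"
  shows "frac_ideal D (ideal_power D A n)" and "ideal_power D A n \<subseteq> D"
proof -
  have "frac_ideal D (ideal_power D A n) \<and> ideal_power D A n \<subseteq> D"
  proof (induction n)
    case 0
    then show ?case using frac_ideal_carrier ideal_power_0 by simp
  next
    case (Suc n)
    then show ?case
      using frac_ideal_prod[OF assms(1)] ideal_prod_subset_carrier[OF assms(2)] ideal_power_Suc by simp
  qed
  then show "frac_ideal D (ideal_power D A n)" "ideal_power D A n \<subseteq> D" by auto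
qed

lemma ideal_power_1: "submod D A \<Longrightarrow> ideal_power D A 1 = A"
  using ideal_power_Suc[of A 0] ideal_power_0 ideal_prod_carrier_right by simp

lemma ideal_power_add:
  assumes "frac_ideal D A" "A \<subseteq> D"
  shows "ideal_power D A (m + n) = ideal_prod (ideal_power D A m) (ideal_power D A n)"
proof (induction m)
  case 0
  then show ?case
    using ideal_power_0 ideal_prod_carrier_left frac_ideal_submod frac_ideal_ideal_power[OF assms]
    by simp
next
  case (Suc m)
  have "ideal_power D A (Suc m + n) = ideal_prod A (ideal_prod (ideal_power D A m) (ideal_power D A n))"
    using Suc ideal_power_Suc by simp
  also have "\<dots> = ideal_prod (ideal_prod A (ideal_power D A m)) (ideal_power D A n)"
    using ideal_prod_assoc frac_ideal_submod frac_ideal_ideal_power[OF assms] assms by metis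
  finally show ?case using ideal_power_Suc by simp
qed

lemma ideal_power_antimono:
  assumes "frac_ideal D A" "A \<subseteq> D" "m \<le> n"
  shows "ideal_power D A n \<subseteq> ideal_power D A m"
proof -
  have "ideal_power D A n = ideal_prod (ideal_power D A m) (ideal_power D A (n - m))"
    using ideal_power_add[OF assms(1,2)] assms(3) by (metis le_add_diff_inverse)
  also have "\<dots> \<subseteq> ideal_power D A m"
    using frac_ideal_ideal_power[OF assms(1,2)] frac_ideal_submod submod_mult_right
    by (intro ideal_prod_subset) blast+
  finally show ?thesis .
qed

lemma ideal_power_subset:
  assumes "frac_ideal D A" "A \<subseteq> D" "1 \<le> n"
  shows "ideal_power D A n \<subseteq> A"
  using ideal_power_antimono[OF assms] ideal_power_1 frac_ideal_submod assms(1) by simp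

lemma power_mem_ideal_power: "p \<in> A \<Longrightarrow> p ^ n \<in> ideal_power D A n"
  by (induction n) (auto simp: ideal_power_0 ideal_power_Suc one_mem intro: ideal_prod_mult_mem)

lemma prod_ideals_Nil: "prod_ideals D [] = D"
  and prod_ideals_Cons: "prod_ideals D (I # Is) = ideal_prod I (prod_ideals D Is)"
  unfolding prod_ideals_def by auto

lemma frac_ideal_prod_ideals:
  assumes "\<forall>I\<in>set Is. frac_ideal D I \<and> I \<subseteq> D"
  shows "frac_ideal D (prod_ideals D Is)" and "prod_ideals D Is \<subseteq> D"
proof -
  have "frac_ideal D (prod_ideals D Is) \<and> prod_ideals D Is \<subseteq> D"
    using assms
  proof (induction Is)
    case Nil
    then show ?case using prod_ideals_Nil frac_ideal_carrier by simp
  next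
    case (Cons I Is)
    then show ?case using frac_ideal_prod ideal_prod_subset_carrier prod_ideals_Cons by simp
  qed
  then show "frac_ideal D (prod_ideals D Is)" "prod_ideals D Is \<subseteq> D" by auto
qed

lemma submod_prod_ideals: "\<forall>J\<in>set Is. submod D J \<Longrightarrow> submod D (prod_ideals D Is)"
  by (induction Is) (auto simp: prod_ideals_Nil prod_ideals_Cons submod_carrier intro: submod_ideal_prod)

lemma prod_ideals_remove1:
  "\<forall>J\<in>set Is. submod D J \<Longrightarrow> I \<in> set Is \<Longrightarrow>
    prod_ideals D Is = ideal_prod I (prod_ideals D (remove1 I Is))"
proof (induction Is)
  case Nil
  then show ?case by simp
next
  case (Cons J Js)
  show ?case
  proof (cases "J = I")
    case True
    then show ?thesis using prod_ideals_Cons by simp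
  next
    case False
    then have IJs: "I \<in> set Js" using Cons by simp
    have sJ: "submod D J" and sI: "submod D I" using Cons IJs by auto
    have sR: "submod D (prod_ideals D (remove1 I Js))"
      using submod_prod_ideals Cons by (meson list.set_intros(2) notin_set_remove1)
    have "prod_ideals D (J # Js) = ideal_prod J (ideal_prod I (prod_ideals D (remove1 I Js)))"
      using prod_ideals_Cons Cons IJs by simp
    also have "\<dots> = ideal_prod I (ideal_prod J (prod_ideals D (remove1 I Js)))"
      using ideal_prod_left_commute[OF sJ sI sR] .
    also have "\<dots> = ideal_prod I (prod_ideals D (remove1 I (J # Js)))"
      using False prod_ideals_Cons by simp
    finally show ?thesis .
  qed
qed
lemma ideal_prod_not_subset_prime:
  assumes "prime_ideal D P" "A \<subseteq> D" "B \<subseteq> D" "\<not> A \<subseteq> P" "\<not> B \<subseteq> P"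
  shows "\<not> ideal_prod A B \<subseteq> P"
proof -
  obtain a b where "a \<in> A" "a \<notin> P" "b \<in> B" "b \<notin> P" using assms by blast
  then have "a * b \<notin> P" "a * b \<in> ideal_prod A B"
    using assms ideal_prod_mult_mem unfolding prime_ideal_def by blast+
  then show ?thesis by blast
qed

end

locale star_op = frac_ideals +
  fixes st :: "'a::field set \<Rightarrow> 'a set"
  assumes star_operation: "star_operation D st"
    and finite_character: "finite_character D st"
begin

lemma frac_ideal_star: "frac_ideal D I \<Longrightarrow> frac_ideal D (st I)"
  and star_principal: "x \<noteq> 0 \<Longrightarrow> st (principal D x) = principal D x"
  and star_smult: "x \<noteq> 0 \<Longrightarrow> frac_ideal D I \<Longrightarrow> st (smult x I) = smult x (st I)"
  and star_extensive: "frac_ideal D I \<Longrightarrow> I \<subseteq> st I"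
  and star_mono: "frac_ideal D I \<Longrightarrow> frac_ideal D J \<Longrightarrow> I \<subseteq> J \<Longrightarrow> st I \<subseteq> st J"
  and star_idem: "frac_ideal D I \<Longrightarrow> st (st I) = st I"
  using star_operation unfolding star_operation_def by simp_all

lemma star_carrier: "st D = D"
  using star_principal[of 1] principal_one by simp

lemma star_subset_carrier: "frac_ideal D I \<Longrightarrow> I \<subseteq> D \<Longrightarrow> st I \<subseteq> D"
  using star_mono[OF _ frac_ideal_carrier] star_carrier by auto

lemma submod_star: "frac_ideal D I \<Longrightarrow> submod D (st I)"
  using frac_ideal_star frac_ideal_submod by blast

lemma mem_star_finite_character:
  "frac_ideal D I \<Longrightarrow> x \<in> st I \<Longrightarrow> \<exists>J. fg_frac_ideal D J \<and> J \<subseteq> I \<and> x \<in> st J"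
  using finite_character unfolding finite_character_def by blast

lemma fg_frac_idealD: "fg_frac_ideal D J \<Longrightarrow> frac_ideal D J"
  and fg_frac_ideal_generators: "fg_frac_ideal D J \<Longrightarrow> \<exists>S. finite S \<and> J = generated D S"
  unfolding fg_frac_ideal_def by auto

lemma star_ideal_prod_star_right:
  assumes "frac_ideal D A" "frac_ideal D B"
  shows "st (ideal_prod A (st B)) = st (ideal_prod A B)"
proof
  have fAB: "frac_ideal D (ideal_prod A B)" using frac_ideal_prod assms by blast
  have fAsB: "frac_ideal D (ideal_prod A (st B))" using frac_ideal_prod assms frac_ideal_star by blast
  show "st (ideal_prod A B) \<subseteq> st (ideal_prod A (st B))"
    using star_mono[OF fAB fAsB] ideal_prod_mono[OF order_refl star_extensive[OF assms(2)]] by blast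
  have "ideal_prod A (st B) \<subseteq> st (ideal_prod A B)"
  proof (rule ideal_prod_subset[OF submod_star[OF fAB]])
    fix a b assume a: "a \<in> A" and b: "b \<in> st B"
    show "a * b \<in> st (ideal_prod A B)"
    proof (cases "a = 0")
      case True
      then show ?thesis using submod_zero[OF submod_star[OF fAB]] by simp
    next
      case False
      obtain d where d: "d \<in> D" "d \<noteq> 0" "\<forall>x\<in>A. d * x \<in> D"
        using frac_ideal_denominator assms(1) by meson
      have fs: "frac_ideal D (smult a B)"
        using frac_ideal_smult[OF assms(2) False d(1,2)] d(3) a by auto
      have "a * b \<in> smult a (st B)" unfolding smult_iff using b by auto
      also have "\<dots> = st (smult a B)" using star_smult[OF False assms(2)] by simp
      also have "\<dots> \<subseteq> st (ideal_prod A B)" using star_mono[OF fs fAB smult_subset_ideal_prod[OF a]] .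
      finally show ?thesis .
    qed
  qed
  then show "st (ideal_prod A (st B)) \<subseteq> st (ideal_prod A B)"
    using star_mono[OF fAsB frac_ideal_star[OF fAB]] star_idem[OF fAB] by blast
qed

lemma star_ideal_prod_star_left:
  assumes "frac_ideal D A" "frac_ideal D B"
  shows "st (ideal_prod (st A) B) = st (ideal_prod A B)"
  using star_ideal_prod_star_right[OF assms(2,1)] ideal_prod_commute by metis

lemma star_eq_of_common_inverse:
  assumes fI: "frac_ideal D I" and fX: "frac_ideal D X" and fQ: "frac_ideal D Q"
    and IQ: "st (ideal_prod I Q) = D" and XQ: "st (ideal_prod X Q) = D"
  shows "st I = st X"
proof -
  have sI: "submod D I" and sX: "submod D X" and sQ: "submod D Q"
    using fI fX fQ frac_ideal_submod by auto
  have fXQ: "frac_ideal D (ideal_prod X Q)" and fIQ: "frac_ideal D (ideal_prod I Q)"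
    using frac_ideal_prod fI fX fQ by auto
  have "st I = st (ideal_prod I (st (ideal_prod X Q)))"
    using XQ ideal_prod_carrier_right[OF sI] by simp
  also have "\<dots> = st (ideal_prod X (ideal_prod I Q))"
    using star_ideal_prod_star_right[OF fI fXQ] ideal_prod_left_commute[OF sI sX sQ] by simp
  also have "\<dots> = st X"
    using star_ideal_prod_star_right[OF fX fIQ, symmetric] IQ ideal_prod_carrier_right[OF sX] by simp
  finally show ?thesis .
qed

lemma integral_star_idealD:
  assumes "integral_star_ideal D st I"
  shows "frac_ideal D I" and "I \<subseteq> D" and "st I = I" and "submod D I"
  using assms frac_ideal_submod unfolding integral_star_ideal_def star_ideal_def by auto

lemma integral_star_ideal_star: "frac_ideal D I \<Longrightarrow> I \<subseteq> D \<Longrightarrow> integral_star_ideal D st (st I)"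
  unfolding integral_star_ideal_def star_ideal_def
  using frac_ideal_star star_idem star_subset_carrier by auto

lemma max_star_idealD:
  assumes "max_star_ideal D st P"
  shows "integral_star_ideal D st P" and "P \<noteq> D"
    and "\<And>J. integral_star_ideal D st J \<Longrightarrow> J \<noteq> D \<Longrightarrow> P \<subseteq> J \<Longrightarrow> J = P"
  using assms unfolding max_star_ideal_def by auto

lemma one_notin_integral_star_ideal: "integral_star_ideal D st P \<Longrightarrow> P \<noteq> D \<Longrightarrow> 1 \<notin> P"
  using integral_star_idealD(2,4) submod_eq_carrier_if_one by blast

lemma one_notin_max_star_ideal: "max_star_ideal D st P \<Longrightarrow> 1 \<notin> P"
  using one_notin_integral_star_ideal max_star_idealD(1,2) by blast

text \<open>Finite character is what is needed here: a finitely generated ideal below \<open>\<Union>C\<close>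
  already lies below one member of the chain.\<close>
lemma integral_star_ideal_Union_chain:
  assumes C: "C \<noteq> {}" "subset.chain \<A> C"
    and mem: "\<And>X. X \<in> C \<Longrightarrow> integral_star_ideal D st X \<and> X \<noteq> D"
  shows "integral_star_ideal D st (\<Union>C)" and "\<Union>C \<noteq> D"
proof -
  let ?U = "\<Union>C"
  obtain X0 where X0: "X0 \<in> C" using C(1) by blast
  have iX: "integral_star_ideal D st X" and nX: "X \<noteq> D" if "X \<in> C" for X
    using mem[OF that] by auto
  have smX: "submod D X" and stX: "st X = X" and XD: "X \<subseteq> D" if "X \<in> C" for X
    using integral_star_idealD[OF iX[OF that]] by auto
  have smU: "submod D ?U" using submod_Union_chain[OF C] smX by blast
  have UD: "?U \<subseteq> D" using XD by blast
  have "1 \<notin> X" if "X \<in> C" for X using one_notin_integral_star_ideal iX nX that by blast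
  then show "?U \<noteq> D" using one_mem by blast
  obtain a where a: "a \<in> X0" "a \<noteq> 0"
    using frac_ideal_nonzero_mem integral_star_idealD(1)[OF iX[OF X0]] by blast
  have fU: "frac_ideal D ?U" using frac_ideal_integralI[OF smU UD, of a] a X0 by blast
  have "st ?U \<subseteq> ?U"
  proof
    fix x assume "x \<in> st ?U"
    then obtain G where G: "fg_frac_ideal D G" "G \<subseteq> ?U" "x \<in> st G"
      using mem_star_finite_character fU by blast
    obtain S where S: "finite S" "G = generated D S" using fg_frac_ideal_generators G(1) by blast
    have SU: "S \<subseteq> ?U" using generators_subset_generated S G(2) by blast
    obtain X where X: "X \<in> C" "S \<subseteq> X"
      using finite_subset_Union_chain[OF S(1) SU C] .
    have "G \<subseteq> X" using generated_least[OF S(1) smX[OF X(1)] X(2)] S(2) by simp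
    then have "st G \<subseteq> st X"
      using star_mono[OF fg_frac_idealD[OF G(1)] integral_star_idealD(1)[OF iX[OF X(1)]]] by blast
    then show "x \<in> ?U" using G(3) stX X(1) by blast
  qed
  then show "integral_star_ideal D st ?U"
    unfolding integral_star_ideal_def star_ideal_def using star_extensive[OF fU] fU UD by blast
qed

lemma exists_max_star_ideal:
  assumes "integral_star_ideal D st J" "J \<noteq> D"
  shows "\<exists>M. max_star_ideal D st M \<and> J \<subseteq> M"
proof -
  let ?A = "{X. integral_star_ideal D st X \<and> X \<noteq> D \<and> J \<subseteq> X}"
  have "\<exists>M\<in>?A. \<forall>X\<in>?A. M \<subseteq> X \<longrightarrow> X = M"
  proof (rule subset_Zorn_nonempty)
    show "?A \<noteq> {}" using assms by blast
  next
    fix C assume C: "C \<noteq> {}" "subset.chain ?A C"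
    then have CA: "C \<subseteq> ?A" unfolding subset_chain_def by blast
    have "integral_star_ideal D st (\<Union>C)" "\<Union>C \<noteq> D"
      using integral_star_ideal_Union_chain[OF C] CA by blast+
    moreover have "J \<subseteq> \<Union>C" using C(1) CA by blast
    ultimately show "\<Union>C \<in> ?A" by blast
  qed
  then obtain M where "M \<in> ?A" "\<forall>X\<in>?A. M \<subseteq> X \<longrightarrow> X = M" by blast
  then have "max_star_ideal D st M" "J \<subseteq> M" unfolding max_star_ideal_def by blast+
  then show ?thesis by blast
qed

lemma star_eq_carrier_if_no_max_above:
  assumes "frac_ideal D S" "S \<subseteq> D"
    and "\<And>M. max_star_ideal D st M \<Longrightarrow> S \<subseteq> M \<Longrightarrow> False"
  shows "st S = D"
  using exists_max_star_ideal[OF integral_star_ideal_star[OF assms(1,2)]]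
    star_extensive[OF assms(1)] assms(3) by blast

lemma mem_star_of_smult_subset:
  assumes "frac_ideal D S" "st S = D" "z \<in> D" "z \<noteq> 0" "frac_ideal D T" "smult z S \<subseteq> T"
  shows "z \<in> st T"
proof -
  have "z * 1 \<in> smult z (st S)" using assms(2) one_mem unfolding smult_iff by blast
  then have "z \<in> smult z (st S)" by simp
  also have "\<dots> = st (smult z S)" using star_smult[OF assms(4,1)] by simp
  also have "\<dots> \<subseteq> st T"
    using star_mono[OF frac_ideal_smult[OF assms(1,4) one_mem] assms(5,6)] assms(3) by simp
  finally show ?thesis .
qed

lemma max_star_ideal_prime:
  assumes P: "max_star_ideal D st P"
  shows "prime_ideal D P"
proof -
  have iP: "integral_star_ideal D st P" using max_star_idealD(1)[OF P] .
  note frac_ideal_P = integral_star_idealD(1)[OF iP] and P_subset_carrier = integral_star_idealD(2)[OF iP]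
    and star_P = integral_star_idealD(3)[OF iP] and submod_P = integral_star_idealD(4)[OF iP]
  have "x \<in> P \<or> y \<in> P" if xy: "x \<in> D" "y \<in> D" "x * y \<in> P" for x y
  proof (rule ccontr)
    assume "\<not> (x \<in> P \<or> y \<in> P)"
    then have nx: "x \<notin> P" and ny: "y \<notin> P" by auto
    have x0: "x \<noteq> 0" and y0: "y \<noteq> 0" using nx ny submod_zero[OF submod_P] by auto
    let ?A = "set_plus P (principal D x)"
    have fA: "frac_ideal D ?A"
      using frac_ideal_set_plus[OF frac_ideal_P frac_ideal_principal[OF xy(1) x0] P_subset_carrier principal_subset[OF xy(1)]] .
    have AD: "?A \<subseteq> D" using set_plus_subset_carrier[OF P_subset_carrier principal_subset[OF xy(1)]] .
    have "st ?A = D"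
    proof (rule star_eq_carrier_if_no_max_above[OF fA AD])
      fix M assume M: "max_star_ideal D st M" "?A \<subseteq> M"
      have "P \<subseteq> ?A" using set_plus_upper_left submod_principal xy(1) by blast
      then have "M = P" using max_star_idealD(3)[OF P max_star_idealD(1,2)[OF M(1)]] M(2) by blast
      moreover have "x \<in> ?A" using set_plus_upper_right[OF submod_P] mem_principal_self by blast
      ultimately show False using M(2) nx by blast
    qed
    moreover have "smult y ?A \<subseteq> P"
    proof
      fix z assume "z \<in> smult y ?A"
      then obtain a d where ad: "a \<in> P" "d \<in> D" "z = y * (a + x * d)"
        by (auto simp: smult_iff set_plus_iff principal_iff)
      then have "z = y * a + (x * y) * d" by (simp add: algebra_simps)
      moreover have "y * a \<in> P" "(x * y) * d \<in> P"
        using submod_mult_left[OF submod_P] submod_mult_right[OF submod_P] xy ad by auto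
      ultimately show "z \<in> P" using submod_add[OF submod_P] by simp
    qed
    ultimately have "y \<in> st P" using mem_star_of_smult_subset[OF fA _ xy(2) y0 frac_ideal_P] by blast
    then show False using ny star_P by simp
  qed
  then show ?thesis unfolding prime_ideal_def using submod_P P_subset_carrier max_star_idealD(2)[OF P] by blast
qed

end

context star_op
begin

lemma star_homogD:
  assumes "star_homog D st I"
  shows "integral_star_ideal D st I" and "star_finite_type D st I" and "I \<noteq> D"
  using assms unfolding star_homog_def by auto

lemma star_finite_type_between:
  assumes I: "star_finite_type D st I" and M: "max_star_ideal D st M" "I \<subseteq> M"
    and T: "finite T" "T \<subseteq> M"
  shows "\<exists>J. integral_star_ideal D st J \<and> star_finite_type D st J \<and> J \<noteq> D \<and> I \<subseteq> J \<and> T \<subseteq> J"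
proof -
  obtain K where K: "fg_frac_ideal D K" "I = st K" using I unfolding star_finite_type_def by blast
  obtain SK where SK: "finite SK" "K = generated D SK" using fg_frac_ideal_generators K(1) by blast
  have fK: "frac_ideal D K" using fg_frac_idealD K(1) .
  have iM: "integral_star_ideal D st M" using max_star_idealD(1)[OF M(1)] .
  note fM = integral_star_idealD[OF iM]
  let ?G = "generated D (SK \<union> T)"
  have fin: "finite (SK \<union> T)" using SK(1) T(1) by simp
  have "SK \<subseteq> M" using generators_subset_generated[OF SK(1)] SK(2) star_extensive[OF fK] K(2) M(2)
    by blast
  then have GM: "?G \<subseteq> M" using generated_least[OF fin fM(4)] T(2) by blast
  have KG: "K \<subseteq> ?G"
    using generated_least[OF SK(1) submod_generated] generators_subset_generated[OF fin] SK(2) by blast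
  obtain k where k: "k \<in> K" "k \<noteq> 0" using frac_ideal_nonzero_mem fK by blast
  have fG: "frac_ideal D ?G"
    using frac_ideal_integralI[OF submod_generated _ _ k(2)] GM fM(2) KG k(1) by blast
  have "st ?G \<subseteq> M" using star_mono[OF fG fM(1) GM] fM(3) by simp
  then have "st ?G \<noteq> D" using fM(2) max_star_idealD(2)[OF M(1)] by blast
  moreover have "integral_star_ideal D st (st ?G)"
    using integral_star_ideal_star[OF fG] GM fM(2) by blast
  moreover have "star_finite_type D st (st ?G)"
    unfolding star_finite_type_def using calculation(2) fG fin
    unfolding integral_star_ideal_def fg_frac_ideal_def by blast
  moreover have "I \<subseteq> st ?G" using star_mono[OF fK fG KG] K(2) by simp
  moreover have "T \<subseteq> st ?G" using generators_subset_generated[OF fin] star_extensive[OF fG] by blast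
  ultimately show ?thesis by blast
qed

text \<open>If \<open>I \<subseteq> M\<^sub>1 \<inter> M\<^sub>2\<close>, then \<open>1 \<in> (M\<^sub>1 + M\<^sub>2)\<^sup>\<star>\<close> is witnessed by finitely many
  elements, and splitting their summands yields two \<open>\<star>\<close>-ideals of finite type above \<open>I\<close>
  that are \<open>\<star>\<close>-comaximal.\<close>
lemma star_homog_unique_max:
  assumes H: "star_homog D st I" and M1: "max_star_ideal D st M1" and M2: "max_star_ideal D st M2"
    and IM1: "I \<subseteq> M1" and IM2: "I \<subseteq> M2"
  shows "M1 = M2"
proof (rule ccontr)
  assume ne: "M1 \<noteq> M2"
  note f1 = integral_star_idealD[OF max_star_idealD(1)[OF M1]]
  note f2 = integral_star_idealD[OF max_star_idealD(1)[OF M2]]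
  let ?M = "set_plus M1 M2"
  have fM: "frac_ideal D ?M" using frac_ideal_set_plus f1 f2 by blast
  have MD: "?M \<subseteq> D" using set_plus_subset_carrier f1 f2 by blast
  have "st ?M = D"
  proof (rule star_eq_carrier_if_no_max_above[OF fM MD])
    fix M assume M: "max_star_ideal D st M" "?M \<subseteq> M"
    have "M1 \<subseteq> M" "M2 \<subseteq> M"
      using set_plus_upper_left[OF f2(4)] set_plus_upper_right[OF f1(4)] M(2) by blast+
    then show False
      using max_star_idealD(3)[OF M1 max_star_idealD(1,2)[OF M(1)]]
        max_star_idealD(3)[OF M2 max_star_idealD(1,2)[OF M(1)]] ne by blast
  qed
  then obtain G where G: "fg_frac_ideal D G" "G \<subseteq> ?M" "1 \<in> st G"
    using mem_star_finite_character[OF fM] one_mem by blast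
  obtain S where S: "finite S" "G = generated D S" using fg_frac_ideal_generators G(1) by blast
  have "\<forall>s\<in>S. \<exists>p. fst p \<in> M1 \<and> snd p \<in> M2 \<and> s = fst p + snd p"
    using generators_subset_generated[OF S(1)] S(2) G(2) by (force simp: set_plus_iff)
  then obtain h where h: "\<forall>s\<in>S. fst (h s) \<in> M1 \<and> snd (h s) \<in> M2 \<and> s = fst (h s) + snd (h s)"
    by (metis bchoice)
  obtain J1 where J1: "integral_star_ideal D st J1" "star_finite_type D st J1" "J1 \<noteq> D" "I \<subseteq> J1"
    "(fst \<circ> h) ` S \<subseteq> J1"
    using star_finite_type_between[OF star_homogD(2)[OF H] M1 IM1, of "(fst \<circ> h) ` S"] S(1) h
    by auto
  obtain J2 where J2: "integral_star_ideal D st J2" "star_finite_type D st J2" "J2 \<noteq> D" "I \<subseteq> J2"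
    "(snd \<circ> h) ` S \<subseteq> J2"
    using star_finite_type_between[OF star_homogD(2)[OF H] M2 IM2, of "(snd \<circ> h) ` S"] S(1) h
    by auto
  note fJ1 = integral_star_idealD[OF J1(1)] and fJ2 = integral_star_idealD[OF J2(1)]
  let ?J = "set_plus J1 J2"
  have fJ: "frac_ideal D ?J" using frac_ideal_set_plus fJ1 fJ2 by blast
  have "S \<subseteq> ?J" using h J1(5) J2(5) by (force simp: set_plus_iff)
  then have "G \<subseteq> ?J" using generated_least[OF S(1) submod_set_plus[OF fJ1(4) fJ2(4)]] S(2) by simp
  then have "1 \<in> st ?J" using star_mono[OF fg_frac_idealD[OF G(1)] fJ] G(3) by blast
  then have "st ?J = D"
    using submod_eq_carrier_if_one[OF submod_star[OF fJ] star_subset_carrier[OF fJ]]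
      set_plus_subset_carrier fJ1(2) fJ2(2) by blast
  moreover have "st ?J \<noteq> D" using H J1 J2 unfolding star_homog_def by blast
  ultimately show False by simp
qed

lemma M_of_eq:
  assumes "star_homog D st I" "max_star_ideal D st P" "I \<subseteq> P"
  shows "M_of D st I = P"
  unfolding M_of_def using assms star_homog_unique_max by (intro the_equality) blast+

end

locale star_max_ideal = star_op +
  fixes P :: "'a::field set"
  assumes max_P: "max_star_ideal D st P"
begin

abbreviation "P_pow \<equiv> ideal_power D P"

lemma frac_ideal_P: "frac_ideal D P" and P_subset_carrier: "P \<subseteq> D"
  and star_P: "st P = P" and submod_P: "submod D P"
  using integral_star_idealD[OF max_star_idealD(1)[OF max_P]] .

lemma prime_P: "prime_ideal D P"
  using max_star_ideal_prime[OF max_P] .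

lemma one_notin_P: "1 \<notin> P"
  using one_notin_max_star_ideal[OF max_P] .

lemma frac_ideal_P_pow: "frac_ideal D (P_pow n)"
  using frac_ideal_ideal_power(1)[OF frac_ideal_P P_subset_carrier] .

lemma submod_P_pow: "submod D (P_pow n)"
  using frac_ideal_submod frac_ideal_P_pow .

end

locale star_SH_type2_at_max = star_max_ideal +
  assumes SH_type2: "star_SH_type2 D st"
begin

definition factors_at :: "'a \<Rightarrow> nat \<Rightarrow> 'a set \<Rightarrow> bool" where
  "factors_at x e A \<longleftrightarrow> frac_ideal D A \<and> A \<subseteq> D \<and> \<not> A \<subseteq> P \<and>
     principal D x = st (ideal_prod (P_pow e) A)"

lemma prod_homog_type2_factors_at:
  assumes "\<forall>I\<in>set Is. star_homog_type2 D st I"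
  shows "\<exists>e A. frac_ideal D A \<and> A \<subseteq> D \<and> \<not> A \<subseteq> P \<and>
    st (prod_ideals D Is) = st (ideal_prod (P_pow e) A)"
  using assms
proof (induction Is)
  case Nil
  have "st (prod_ideals D []) = st (ideal_prod (P_pow 0) D)"
    using prod_ideals_Nil ideal_power_0 ideal_prod_carrier_right submod_carrier by simp
  then show ?case using frac_ideal_carrier one_notin_P one_mem by blast
next
  case (Cons I Is)
  then obtain e A where A: "frac_ideal D A" "A \<subseteq> D" "\<not> A \<subseteq> P"
    "st (prod_ideals D Is) = st (ideal_prod (P_pow e) A)"
    by auto
  have t2: "star_homog_type2 D st I" using Cons.prems by simp
  then have H: "star_homog D st I" unfolding star_homog_type2_def by blast
  note fI = integral_star_idealD[OF star_homogD(1)[OF H]]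
  have "\<forall>J\<in>set Is. frac_ideal D J \<and> J \<subseteq> D"
    using Cons.prems integral_star_idealD star_homogD(1) unfolding star_homog_type2_def by auto
  note fR = frac_ideal_prod_ideals[OF this]
  have fX: "frac_ideal D (ideal_prod (P_pow e) A)" using frac_ideal_prod frac_ideal_P_pow A(1) by blast
  have "st (prod_ideals D (I # Is)) = st (ideal_prod I (st (prod_ideals D Is)))"
    using prod_ideals_Cons star_ideal_prod_star_right[OF fI(1) fR(1)] by simp
  also have "\<dots> = st (ideal_prod I (ideal_prod (P_pow e) A))"
    using A(4) star_ideal_prod_star_right[OF fI(1) fX] by simp
  finally have eq: "st (prod_ideals D (I # Is)) = st (ideal_prod I (ideal_prod (P_pow e) A))" .
  show ?case
  proof (cases "I \<subseteq> P")
    case True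
    then have "M_of D st I = P" using M_of_eq[OF H max_P] by blast
    then obtain n where n: "I = st (P_pow n)" using t2 unfolding star_homog_type2_def by auto
    have "st (ideal_prod I (ideal_prod (P_pow e) A)) = st (ideal_prod (P_pow n) (ideal_prod (P_pow e) A))"
      using n star_ideal_prod_star_left[OF frac_ideal_P_pow fX] by simp
    also have "ideal_prod (P_pow n) (ideal_prod (P_pow e) A) = ideal_prod (P_pow (n + e)) A"
      using ideal_prod_assoc[OF submod_P_pow frac_ideal_submod[OF A(1)]] ideal_power_add[OF frac_ideal_P P_subset_carrier]
      by simp
    finally show ?thesis using eq A by metis
  next
    case False
    have "ideal_prod I (ideal_prod (P_pow e) A) = ideal_prod (P_pow e) (ideal_prod I A)"
      using ideal_prod_left_commute fI(4) submod_P_pow frac_ideal_submod[OF A(1)] by blast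
    moreover have "frac_ideal D (ideal_prod I A)" using frac_ideal_prod fI(1) A(1) by blast
    moreover have "ideal_prod I A \<subseteq> D" using ideal_prod_subset_carrier fI(2) A(2) by blast
    moreover have "\<not> ideal_prod I A \<subseteq> P"
      using ideal_prod_not_subset_prime[OF prime_P] fI(2) A(2) False A(3) by blast
    ultimately show ?thesis using eq by metis
  qed
qed

lemma factors_at_exists:
  assumes x: "x \<in> D" "x \<noteq> 0"
  shows "\<exists>e A. factors_at x e A"
proof (cases "x \<in> P")
  case False
  have "st (ideal_prod (P_pow 0) (principal D x)) = principal D x"
    using ideal_power_0 ideal_prod_carrier_left submod_principal x star_principal by simp
  then have "factors_at x 0 (principal D x)"
    unfolding factors_at_def
    using frac_ideal_principal principal_subset mem_principal_self x False by blast
  then show ?thesis by blast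
next
  case True
  have "\<not> is_unit_in D x"
  proof
    assume "is_unit_in D x"
    then obtain y where "y \<in> D" "x * y = 1" unfolding is_unit_in_def by blast
    then show False using True submod_mult_right submod_P one_notin_P by metis
  qed
  then obtain Is where "\<forall>I\<in>set Is. star_homog_type2 D st I" "principal D x = st (prod_ideals D Is)"
    using SH_type2 x unfolding star_SH_type2_def by blast
  then show ?thesis using prod_homog_type2_factors_at unfolding factors_at_def by metis
qed

end

context star_op
begin

lemma star_cancel_invertible:
  assumes fA: "frac_ideal D A" and fQ: "frac_ideal D Q" and AQ: "st (ideal_prod A Q) = D"
    and fX: "frac_ideal D X"
  shows "st X = st (ideal_prod Q (st (ideal_prod A X)))"
proof -
  have fAX: "frac_ideal D (ideal_prod A X)" using frac_ideal_prod fA fX by blast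
  have fQA: "frac_ideal D (ideal_prod Q A)" using frac_ideal_prod fQ fA by blast
  have "st X = st (ideal_prod (st (ideal_prod Q A)) X)"
    using AQ ideal_prod_commute ideal_prod_carrier_left frac_ideal_submod[OF fX] by metis
  also have "\<dots> = st (ideal_prod Q (ideal_prod A X))"
    using star_ideal_prod_star_left[OF fQA fX]
      ideal_prod_assoc[OF frac_ideal_submod[OF fQ] frac_ideal_submod[OF fX]] by simp
  also have "\<dots> = st (ideal_prod Q (st (ideal_prod A X)))"
    using star_ideal_prod_star_right[OF fQ fAX] by simp
  finally show ?thesis .
qed

lemma star_cancel_invertible_subset:
  assumes fA: "frac_ideal D A" and fQ: "frac_ideal D Q" and AQ: "st (ideal_prod A Q) = D"
    and fX: "frac_ideal D X" and fY: "frac_ideal D Y"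
    and le: "st (ideal_prod A X) \<subseteq> st (ideal_prod A Y)"
  shows "st X \<subseteq> st Y"
proof -
  have fAX: "frac_ideal D (ideal_prod A X)" and fAY: "frac_ideal D (ideal_prod A Y)"
    using frac_ideal_prod fA fX fY by blast+
  have "st (ideal_prod Q (st (ideal_prod A X))) \<subseteq> st (ideal_prod Q (st (ideal_prod A Y)))"
    using star_mono[OF frac_ideal_prod[OF fQ frac_ideal_star[OF fAX]]
        frac_ideal_prod[OF fQ frac_ideal_star[OF fAY]]]
      ideal_prod_mono[OF order_refl le] by blast
  then show ?thesis using star_cancel_invertible[OF fA fQ AQ] fX fY by simp
qed

end

context star_SH_type2_at_max
begin

lemma star_invertible: "\<exists>Q. frac_ideal D Q \<and> st (ideal_prod P Q) = D"
proof -
  obtain x where x: "x \<in> P" "x \<noteq> 0" using frac_ideal_nonzero_mem frac_ideal_P by blast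
  have xD: "x \<in> D" using x P_subset_carrier by blast
  obtain e A where "factors_at x e A" using factors_at_exists xD x by blast
  then have A: "frac_ideal D A" "A \<subseteq> D" "\<not> A \<subseteq> P" "principal D x = st (ideal_prod (P_pow e) A)"
    unfolding factors_at_def by auto
  have "e \<noteq> 0"
  proof
    assume "e = 0"
    then have "principal D x = st A"
      using A(4) ideal_power_0 ideal_prod_carrier_left frac_ideal_submod A(1) by simp
    moreover have "principal D x \<subseteq> P" using x submod_mult_right submod_P by (auto simp: principal_iff)
    ultimately show False using star_extensive[OF A(1)] A(3) by blast
  qed
  then obtain e' where e: "e = Suc e'" by (cases e) auto
  let ?B = "ideal_prod (P_pow e') A"
  have fB: "frac_ideal D ?B" using frac_ideal_prod frac_ideal_P_pow A(1) by blast
  let ?Q = "smult (1 / x) ?B"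
  have fQ: "frac_ideal D ?Q" using frac_ideal_smult[OF fB _ xD x(2)] x one_mem by simp
  have "ideal_prod P ?B = ideal_prod (P_pow e) A"
    using e ideal_power_Suc ideal_prod_assoc[OF submod_P frac_ideal_submod[OF A(1)]] by simp
  then have "st (ideal_prod P ?Q) = smult (1 / x) (st (ideal_prod (P_pow e) A))"
    using ideal_prod_smult_right[of "1 / x" P ?B] star_smult[of "1 / x"] x
      frac_ideal_prod[OF frac_ideal_P_pow A(1)] by simp
  also have "\<dots> = D" using A(4) smult_principal[of "1 / x" x] x principal_one by simp
  finally show ?thesis using fQ by blast
qed

lemma star_cancel_P_pow:
  assumes "frac_ideal D X" "frac_ideal D Y"
    and "st (ideal_prod (P_pow e) X) \<subseteq> st (ideal_prod (P_pow e) Y)"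
  shows "st X \<subseteq> st Y"
  using assms
proof (induction e)
  case 0
  then show ?case using ideal_power_0 ideal_prod_carrier_left frac_ideal_submod by simp
next
  case (Suc e)
  obtain Q where Q: "frac_ideal D Q" "st (ideal_prod P Q) = D" using star_invertible by blast
  have "ideal_prod (P_pow (Suc e)) Z = ideal_prod P (ideal_prod (P_pow e) Z)"
    if "frac_ideal D Z" for Z
    using ideal_power_Suc ideal_prod_assoc[OF submod_P frac_ideal_submod[OF that]] by simp
  then have "st (ideal_prod (P_pow e) X) \<subseteq> st (ideal_prod (P_pow e) Y)"
    using star_cancel_invertible_subset[OF frac_ideal_P Q frac_ideal_prod[OF frac_ideal_P_pow Suc.prems(1)]
        frac_ideal_prod[OF frac_ideal_P_pow Suc.prems(2)]] Suc.prems by simp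
  then show ?case using Suc by blast
qed

lemma factors_at_mem_star_P_pow_iff:
  assumes "factors_at x e A"
  shows "x \<in> st (P_pow m) \<longleftrightarrow> m \<le> e"
proof -
  have A: "frac_ideal D A" "A \<subseteq> D" "\<not> A \<subseteq> P" "principal D x = st (ideal_prod (P_pow e) A)"
    using assms unfolding factors_at_def by auto
  have fX: "frac_ideal D (ideal_prod (P_pow e) A)" using frac_ideal_prod frac_ideal_P_pow A(1) by blast
  show ?thesis
  proof
    assume xm: "x \<in> st (P_pow m)"
    show "m \<le> e"
    proof (rule ccontr)
      assume "\<not> m \<le> e"
      then obtain k where k: "m = e + k" "1 \<le> k" by (intro that[of "m - e"]) auto
      have "principal D x \<subseteq> st (P_pow m)"
        using xm submod_mult_right submod_star[OF frac_ideal_P_pow] by (auto simp: principal_iff)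
      then have "st (ideal_prod (P_pow e) A) \<subseteq> st (ideal_prod (P_pow e) (P_pow k))"
        using A(4) ideal_power_add[OF frac_ideal_P P_subset_carrier] k(1) by simp
      then have "st A \<subseteq> st (P_pow k)" using star_cancel_P_pow[OF A(1) frac_ideal_P_pow] by blast
      also have "\<dots> \<subseteq> st P" using star_mono[OF frac_ideal_P_pow frac_ideal_P ideal_power_subset[OF frac_ideal_P P_subset_carrier k(2)]] .
      finally show False using star_extensive[OF A(1)] star_P A(3) by blast
    qed
  next
    assume "m \<le> e"
    have "ideal_prod (P_pow e) A \<subseteq> P_pow e"
      by (rule ideal_prod_subset[OF submod_P_pow]) (use A(2) submod_P_pow submod_mult_right in blast)
    then have "principal D x \<subseteq> st (P_pow e)" using A(4) star_mono[OF fX frac_ideal_P_pow] by simp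
    also have "\<dots> \<subseteq> st (P_pow m)"
      using star_mono[OF frac_ideal_P_pow frac_ideal_P_pow ideal_power_antimono[OF frac_ideal_P P_subset_carrier \<open>m \<le> e\<close>]] .
    finally show "x \<in> st (P_pow m)" using mem_principal_self by blast
  qed
qed

definition ord :: "'a \<Rightarrow> nat" where
  "ord x = (THE e. \<exists>A. factors_at x e A)"

lemma ord_eq: "factors_at x e A \<Longrightarrow> ord x = e"
  unfolding ord_def using factors_at_mem_star_P_pow_iff
  by (intro the_equality) (blast, meson le_antisym order_refl)

lemma factors_at_ord: "x \<in> D \<Longrightarrow> x \<noteq> 0 \<Longrightarrow> \<exists>A. factors_at x (ord x) A"
  using factors_at_exists ord_eq by metis

lemma mem_star_P_pow_iff_ord: "x \<in> D \<Longrightarrow> x \<noteq> 0 \<Longrightarrow> x \<in> st (P_pow m) \<longleftrightarrow> m \<le> ord x"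
  using factors_at_ord factors_at_mem_star_P_pow_iff by blast

lemma mem_P_iff_ord: "x \<in> D \<Longrightarrow> x \<noteq> 0 \<Longrightarrow> x \<in> P \<longleftrightarrow> 1 \<le> ord x"
  using mem_star_P_pow_iff_ord[of x 1] ideal_power_1[OF submod_P] star_P by simp

lemma ord_eq_0: "s \<in> D \<Longrightarrow> s \<notin> P \<Longrightarrow> ord s = 0"
  using mem_P_iff_ord[of s] submod_zero[OF submod_P] by fastforce

lemma ord_one: "ord 1 = 0"
  using ord_eq_0 one_mem one_notin_P by blast

lemma ord_mult:
  assumes x: "x \<in> D" "x \<noteq> 0" and y: "y \<in> D" "y \<noteq> 0"
  shows "ord (x * y) = ord x + ord y"
proof -
  obtain A where "factors_at x (ord x) A" using factors_at_ord x by blast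
  then have A: "frac_ideal D A" "A \<subseteq> D" "\<not> A \<subseteq> P" "principal D x = st (ideal_prod (P_pow (ord x)) A)"
    unfolding factors_at_def by auto
  obtain B where "factors_at y (ord y) B" using factors_at_ord y by blast
  then have B: "frac_ideal D B" "B \<subseteq> D" "\<not> B \<subseteq> P" "principal D y = st (ideal_prod (P_pow (ord y)) B)"
    unfolding factors_at_def by auto
  let ?X = "ideal_prod (P_pow (ord x)) A" and ?Y = "ideal_prod (P_pow (ord y)) B"
  have fX: "frac_ideal D ?X" and fY: "frac_ideal D ?Y"
    using frac_ideal_prod frac_ideal_P_pow A(1) B(1) by blast+
  have sA: "submod D A" and sB: "submod D B" using A(1) B(1) frac_ideal_submod by auto
  have "principal D (x * y) = st (ideal_prod (st ?X) (st ?Y))"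
    using principal_mult[OF x(1) y(1)] star_principal[of "x * y"] x y A(4) B(4) by simp
  also have "\<dots> = st (ideal_prod ?X ?Y)"
    using star_ideal_prod_star_right[OF frac_ideal_star[OF fX] fY] star_ideal_prod_star_left[OF fX fY]
    by simp
  also have "ideal_prod ?X ?Y = ideal_prod (P_pow (ord x)) (ideal_prod A ?Y)"
    using ideal_prod_assoc[OF submod_P_pow submod_ideal_prod[OF submod_P_pow]] .
  also have "ideal_prod A ?Y = ideal_prod (P_pow (ord y)) (ideal_prod A B)"
    using ideal_prod_left_commute[OF sA submod_P_pow sB] .
  also have "ideal_prod (P_pow (ord x)) (ideal_prod (P_pow (ord y)) (ideal_prod A B)) =
      ideal_prod (P_pow (ord x + ord y)) (ideal_prod A B)"
    using ideal_prod_assoc[OF submod_P_pow submod_ideal_prod[OF sA]] ideal_power_add[OF frac_ideal_P P_subset_carrier]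
    by simp
  finally have "principal D (x * y) = st (ideal_prod (P_pow (ord x + ord y)) (ideal_prod A B))" .
  moreover have "frac_ideal D (ideal_prod A B)" using frac_ideal_prod A(1) B(1) by blast
  moreover have "ideal_prod A B \<subseteq> D" using ideal_prod_subset_carrier A(2) B(2) by blast
  moreover have "\<not> ideal_prod A B \<subseteq> P"
    using ideal_prod_not_subset_prime[OF prime_P A(2) B(2) A(3) B(3)] .
  ultimately have "factors_at (x * y) (ord x + ord y) (ideal_prod A B)"
    unfolding factors_at_def by blast
  then show ?thesis using ord_eq by blast
qed

lemma ord_power: "x \<in> D \<Longrightarrow> x \<noteq> 0 \<Longrightarrow> ord (x ^ n) = n * ord x"
  by (induction n) (simp_all add: ord_one ord_mult power_mem)

lemma ord_add:
  assumes "x \<in> D" "x \<noteq> 0" "y \<in> D" "y \<noteq> 0" "x + y \<noteq> 0"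
  shows "min (ord x) (ord y) \<le> ord (x + y)"
proof -
  let ?m = "min (ord x) (ord y)"
  have "x \<in> st (P_pow ?m)" "y \<in> st (P_pow ?m)" using mem_star_P_pow_iff_ord assms by auto
  then have "x + y \<in> st (P_pow ?m)" using submod_add submod_star[OF frac_ideal_P_pow] by blast
  then show ?thesis using mem_star_P_pow_iff_ord assms add_mem by blast
qed

lemma local_dvd_of_ord_le:
  assumes x: "x \<in> D" "x \<noteq> 0" and y: "y \<in> D" "y \<noteq> 0" and le: "ord y \<le> ord x"
  shows "\<exists>s\<in>D. s \<notin> P \<and> (\<exists>c\<in>D. x * s = y * c)"
proof -
  obtain B where "factors_at y (ord y) B" using factors_at_ord y by blast
  then have B: "frac_ideal D B" "B \<subseteq> D" "\<not> B \<subseteq> P" "principal D y = st (ideal_prod (P_pow (ord y)) B)"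
    unfolding factors_at_def by auto
  obtain s where s: "s \<in> B" "s \<notin> P" using B(3) by blast
  have sD: "s \<in> D" and s0: "s \<noteq> 0" using s B(2) submod_zero[OF submod_P] by auto
  have "smult s (P_pow (ord y)) \<subseteq> ideal_prod (P_pow (ord y)) B"
    using s(1) ideal_prod_mult_mem by (auto simp: smult_iff mult.commute)
  then have "st (smult s (P_pow (ord y))) \<subseteq> principal D y"
    using star_mono[OF frac_ideal_smult[OF frac_ideal_P_pow s0 one_mem] frac_ideal_prod[OF frac_ideal_P_pow B(1)]]
      B(4) sD by simp
  moreover have "s * x \<in> st (smult s (P_pow (ord y)))"
    using star_smult[OF s0 frac_ideal_P_pow] mem_star_P_pow_iff_ord x le by (auto simp: smult_iff)
  ultimately have "s * x \<in> principal D y" by blast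
  then obtain c where "c \<in> D" "s * x = y * c" unfolding principal_iff by blast
  then show ?thesis using sD s(2) by (auto simp: mult.commute)
qed

lemma exists_ord_eq_1: "\<exists>u\<in>P. u \<noteq> 0 \<and> ord u = 1"
proof -
  have "\<not> P \<subseteq> st (P_pow 2)"
  proof
    assume "P \<subseteq> st (P_pow 2)"
    moreover have "P_pow 2 = ideal_prod P P"
      using ideal_power_Suc[of P 1] ideal_power_1[OF submod_P] by (simp add: numeral_2_eq_2)
    ultimately have "st (ideal_prod P D) \<subseteq> st (ideal_prod P P)"
      using star_P ideal_prod_carrier_right[OF submod_P] by simp
    then have "st D \<subseteq> st P"
      using star_invertible star_cancel_invertible_subset[OF frac_ideal_P _ _ frac_ideal_carrier frac_ideal_P] by blast
    then show False using star_carrier star_P one_notin_P one_mem by blast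
  qed
  then obtain u where u: "u \<in> P" "u \<notin> st (P_pow 2)" by blast
  have u0: "u \<noteq> 0" using u(2) submod_zero submod_star[OF frac_ideal_P_pow] by blast
  have "1 \<le> ord u" "\<not> 2 \<le> ord u" using mem_P_iff_ord mem_star_P_pow_iff_ord P_subset_carrier u u0 by auto
  then show ?thesis using u u0 by auto
qed

end

locale star_SH_type2_at_max_qf = star_SH_type2_at_max +
  assumes quotient_field: "is_quotient_field D"
begin

lemma fraction_cases:
  assumes "z \<noteq> 0"
  obtains a b where "a \<in> D" "b \<in> D" "a \<noteq> 0" "b \<noteq> 0" "z = a / b"
proof -
  obtain a b where "a \<in> D" "b \<in> D" "b \<noteq> 0" "z = a / b"
    using quotient_field unfolding is_quotient_field_def by blast
  moreover then have "a \<noteq> 0" using assms by auto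
  ultimately show ?thesis using that by blast
qed

lemma ord_diff_fraction_eq:
  assumes "a \<in> D" "b \<in> D" "a \<noteq> 0" "b \<noteq> 0" "a' \<in> D" "b' \<in> D" "a' \<noteq> 0" "b' \<noteq> 0"
    and "a / b = a' / b'"
  shows "int (ord a) - int (ord b) = int (ord a') - int (ord b')"
proof -
  have "a * b' = a' * b" using assms by (simp add: frac_eq_eq)
  then have "ord a + ord b' = ord a' + ord b" using ord_mult assms by metis
  then show ?thesis by linarith
qed

text \<open>The \<open>P\<close>-adic valuation on the quotient field; \<open>val 0 = 0\<close> is a junk value.\<close>
definition val :: "'a \<Rightarrow> int" where
  "val z = (if z = 0 then 0 else
     (SOME k. \<exists>a\<in>D. \<exists>b\<in>D. a \<noteq> 0 \<and> b \<noteq> 0 \<and> z = a / b \<and> k = int (ord a) - int (ord b)))"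

lemma val_fraction:
  assumes ab: "a \<in> D" "b \<in> D" "a \<noteq> 0" "b \<noteq> 0"
  shows "val (a / b) = int (ord a) - int (ord b)"
proof -
  let ?R = "\<lambda>k. \<exists>a'\<in>D. \<exists>b'\<in>D. a' \<noteq> 0 \<and> b' \<noteq> 0 \<and> a / b = a' / b' \<and> k = int (ord a') - int (ord b')"
  have "?R (int (ord a) - int (ord b))" using ab by blast
  then have "?R (SOME k. ?R k)" by (rule someI)
  then obtain a' b' where "a' \<in> D" "b' \<in> D" "a' \<noteq> 0" "b' \<noteq> 0" "a / b = a' / b'"
    "(SOME k. ?R k) = int (ord a') - int (ord b')"
    by blast
  moreover have "a / b \<noteq> 0" using ab by simp
  ultimately show ?thesis using ord_diff_fraction_eq[OF ab] unfolding val_def by simp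
qed

lemma val_mult:
  assumes "x \<noteq> 0" "y \<noteq> 0"
  shows "val (x * y) = val x + val y"
proof -
  obtain a b where ab: "a \<in> D" "b \<in> D" "a \<noteq> 0" "b \<noteq> 0" "x = a / b"
    using fraction_cases[OF assms(1)] .
  obtain c d where cd: "c \<in> D" "d \<in> D" "c \<noteq> 0" "d \<noteq> 0" "y = c / d"
    using fraction_cases[OF assms(2)] .
  have "val (x * y) = val ((a * c) / (b * d))" using ab cd by simp
  also have "\<dots> = int (ord (a * c)) - int (ord (b * d))" using val_fraction mult_mem ab cd by simp
  also have "\<dots> = val x + val y" using ord_mult val_fraction ab cd by simp
  finally show ?thesis .
qed

lemma val_add:
  assumes "x \<noteq> 0" "y \<noteq> 0" "x + y \<noteq> 0"
  shows "min (val x) (val y) \<le> val (x + y)"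
proof -
  obtain a b where ab: "a \<in> D" "b \<in> D" "a \<noteq> 0" "b \<noteq> 0" "x = a / b"
    using fraction_cases[OF assms(1)] .
  obtain c d where cd: "c \<in> D" "d \<in> D" "c \<noteq> 0" "d \<noteq> 0" "y = c / d"
    using fraction_cases[OF assms(2)] .
  have ad: "a * d \<in> D" "a * d \<noteq> 0" and cb: "c * b \<in> D" "c * b \<noteq> 0" and bd: "b * d \<in> D" "b * d \<noteq> 0"
    using ab cd mult_mem by auto
  have x: "x = (a * d) / (b * d)" and y: "y = (c * b) / (b * d)" using ab cd by auto
  have s: "x + y = (a * d + c * b) / (b * d)" using x y by (simp add: add_divide_distrib)
  have s0: "a * d + c * b \<noteq> 0" using s assms(3) by auto
  have "val x = int (ord (a * d)) - int (ord (b * d))" using val_fraction[OF ad(1) bd(1) ad(2) bd(2)] x by simp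
  moreover have "val y = int (ord (c * b)) - int (ord (b * d))"
    using val_fraction[OF cb(1) bd(1) cb(2) bd(2)] y by simp
  moreover have "val (x + y) = int (ord (a * d + c * b)) - int (ord (b * d))"
    using val_fraction[OF add_mem[OF ad(1) cb(1)] bd(1) s0 bd(2)] s by simp
  moreover have "min (ord (a * d)) (ord (c * b)) \<le> ord (a * d + c * b)" using ord_add ad cb s0 by blast
  ultimately show ?thesis by linarith
qed

lemma val_surj: "\<exists>x. x \<noteq> 0 \<and> val x = n"
proof -
  obtain u where u: "u \<in> P" "u \<noteq> 0" "ord u = 1" using exists_ord_eq_1 by blast
  let ?k = "nat \<bar>n\<bar>"
  have uk: "u ^ ?k \<in> D" "u ^ ?k \<noteq> 0" "ord (u ^ ?k) = ?k" using power_mem P_subset_carrier u ord_power by auto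
  show ?thesis
  proof (cases "0 \<le> n")
    case True
    then show ?thesis
      using val_fraction[OF uk(1) one_mem uk(2)] ord_one uk by (intro exI[of _ "u ^ ?k"]) auto
  next
    case False
    then show ?thesis
      using val_fraction[OF one_mem uk(1) _ uk(2)] ord_one uk by (intro exI[of _ "1 / u ^ ?k"]) auto
  qed
qed

lemma localization_eq_val_ring: "localization D P = {x. x = 0 \<or> 0 \<le> val x}"
proof
  show "localization D P \<subseteq> {x. x = 0 \<or> 0 \<le> val x}"
  proof
    fix z assume "z \<in> localization D P"
    then obtain a s where as: "a \<in> D" "s \<in> D" "s \<notin> P" "z = a / s"
      unfolding localization_def by blast
    have "s \<noteq> 0" using as submod_zero[OF submod_P] by auto
    then show "z \<in> {x. x = 0 \<or> 0 \<le> val x}"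
      using val_fraction[of a s] ord_eq_0 as by (cases "a = 0") auto
  qed
  show "{x. x = 0 \<or> 0 \<le> val x} \<subseteq> localization D P"
  proof
    fix z assume z: "z \<in> {x. x = 0 \<or> 0 \<le> val x}"
    show "z \<in> localization D P"
    proof (cases "z = 0")
      case True
      then have "z = 0 / 1" by simp
      then show ?thesis unfolding localization_def using zero_mem one_mem one_notin_P by blast
    next
      case False
      then obtain a b where ab: "a \<in> D" "b \<in> D" "a \<noteq> 0" "b \<noteq> 0" "z = a / b"
        by (rule fraction_cases)
      have "ord b \<le> ord a" using z False val_fraction ab by simp
      then obtain s c where sc: "s \<in> D" "s \<notin> P" "c \<in> D" "a * s = b * c"
        using local_dvd_of_ord_le ab by blast
      have "s \<noteq> 0" using sc submod_zero[OF submod_P] by auto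
      then have "z = c / s" using ab sc by (simp add: frac_eq_eq)
      then show ?thesis unfolding localization_def using sc by blast
    qed
  qed
qed

lemma localization_DVR: "is_DVR (localization D P)"
  unfolding is_DVR_def
  using val_mult val_add val_surj localization_eq_val_ring by (intro exI[of _ val]) simp

lemma height_one: "height_one D P"
  unfolding height_one_def
proof (intro conjI allI impI)
  show "prime_ideal D P" using prime_P .
  show "P \<noteq> {0}" using frac_ideal_P unfolding frac_ideal_def by blast
  fix Q assume Q: "prime_ideal D Q \<and> Q \<subseteq> P"
  then have smQ: "submod D Q" unfolding prime_ideal_def by blast
  show "Q = {0} \<or> Q = P"
  proof (cases "Q = {0}")
    case False
    then obtain q where q: "q \<in> Q" "q \<noteq> 0" using submod_zero[OF smQ] by blast
    have qD: "q \<in> D" using q Q P_subset_carrier by blast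
    have "z \<in> Q" if zP: "z \<in> P" and z0: "z \<noteq> 0" for z
    proof -
      have zD: "z \<in> D" using zP P_subset_carrier by blast
      have "1 \<le> ord z" using mem_P_iff_ord zD z0 zP by blast
      then have "ord q \<le> ord (z ^ ord q)" using ord_power zD z0 by simp
      then obtain s c where sc: "s \<in> D" "s \<notin> P" "c \<in> D" "z ^ ord q * s = q * c"
        using local_dvd_of_ord_le[of "z ^ ord q" q] power_mem zD z0 qD q by auto
      have "q * c \<in> Q" using submod_mult_right smQ q sc by blast
      moreover have "s \<notin> Q" using sc Q by blast
      ultimately have "z ^ ord q \<in> Q" using Q sc power_mem zD unfolding prime_ideal_def by metis
      then show ?thesis using prime_ideal_power_mem Q zD by blast
    qed
    then have "P \<subseteq> Q" using submod_zero[OF smQ] by blast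
    then show ?thesis using Q by blast
  qed simp
qed

end

context star_op
begin

text \<open>Works because \<open>P = M(I)\<close> is the only maximal \<open>\<star>\<close>-ideal containing \<open>I + sD\<close>, yet
  \<open>s \<notin> P\<close>; hence \<open>(I + sD)\<^sup>\<star> = D\<close> and \<open>z (I + sD) \<subseteq> I\<close>.\<close>
lemma star_homog_saturated:
  assumes H: "star_homog D st I" and P: "max_star_ideal D st P" "I \<subseteq> P"
    and z: "z \<in> D" and s: "s \<in> D" "s \<notin> P" and zs: "z * s \<in> I"
  shows "z \<in> I"
proof (cases "z = 0")
  case True
  then show ?thesis using submod_zero integral_star_idealD(4)[OF star_homogD(1)[OF H]] by simp
next
  case False
  note fI = integral_star_idealD[OF star_homogD(1)[OF H]]
  have s0: "s \<noteq> 0" using s P submod_zero integral_star_idealD(4) max_star_idealD(1) by metis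
  let ?S = "set_plus I (principal D s)"
  have fS: "frac_ideal D ?S"
    using frac_ideal_set_plus[OF fI(1) frac_ideal_principal[OF s(1) s0] fI(2) principal_subset[OF s(1)]] .
  have SD: "?S \<subseteq> D" using set_plus_subset_carrier[OF fI(2) principal_subset[OF s(1)]] .
  have "st ?S = D"
  proof (rule star_eq_carrier_if_no_max_above[OF fS SD])
    fix M assume M: "max_star_ideal D st M" "?S \<subseteq> M"
    have "I \<subseteq> M" using set_plus_upper_left[OF submod_principal[OF s(1)]] M(2) by blast
    then have "M = P" using star_homog_unique_max[OF H M(1) P(1) _ P(2)] by blast
    moreover have "s \<in> ?S" using set_plus_upper_right[OF fI(4)] mem_principal_self by blast
    ultimately show False using M(2) s(2) by blast
  qed
  moreover have "smult z ?S \<subseteq> I"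
  proof
    fix y assume "y \<in> smult z ?S"
    then obtain i d where id: "i \<in> I" "d \<in> D" "y = z * (i + s * d)"
      by (auto simp: smult_iff set_plus_iff principal_iff)
    then have "y = z * i + (z * s) * d" by (simp add: algebra_simps)
    moreover have "z * i \<in> I" "(z * s) * d \<in> I"
      using submod_mult_left[OF fI(4)] submod_mult_right[OF fI(4)] z zs id by auto
    ultimately show "y \<in> I" using submod_add[OF fI(4)] by simp
  qed
  ultimately have "z \<in> st I" using mem_star_of_smult_subset[OF fS _ z False fI(1)] by blast
  then show ?thesis using fI(3) by simp
qed

end

locale star_DVR_at_max = star_max_ideal +
  fixes v :: "'a \<Rightarrow> int"
  assumes v_mult: "\<And>x y. x \<noteq> 0 \<Longrightarrow> y \<noteq> 0 \<Longrightarrow> v (x * y) = v x + v y"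
    and v_add: "\<And>x y. x \<noteq> 0 \<Longrightarrow> y \<noteq> 0 \<Longrightarrow> x + y \<noteq> 0 \<Longrightarrow> min (v x) (v y) \<le> v (x + y)"
    and v_surj: "\<And>n. \<exists>x. x \<noteq> 0 \<and> v x = n"
    and localization_eq: "localization D P = {x. x = 0 \<or> 0 \<le> v x}"
begin

lemma zero_mem_P: "0 \<in> P"
  using submod_zero[OF submod_P] .

lemma fraction_mem_localization: "a \<in> D \<Longrightarrow> s \<in> D \<Longrightarrow> s \<notin> P \<Longrightarrow> a / s \<in> localization D P"
  unfolding localization_def by blast

lemma localization_fraction:
  assumes "z \<in> localization D P"
  obtains a s where "a \<in> D" "s \<in> D" "s \<notin> P" "s \<noteq> 0" "z = a / s"
  using assms zero_mem_P unfolding localization_def by blast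

lemma v_one: "v 1 = 0"
  using v_mult[of 1 1] by simp

lemma v_inverse: "x \<noteq> 0 \<Longrightarrow> v (1 / x) = - v x"
  using v_mult[of x "1 / x"] v_one by simp

lemma v_power: "x \<noteq> 0 \<Longrightarrow> v (x ^ k) = int k * v x"
  by (induction k) (auto simp: v_one v_mult algebra_simps)

lemma v_nonneg: "d \<in> D \<Longrightarrow> d \<noteq> 0 \<Longrightarrow> 0 \<le> v d"
  using fraction_mem_localization[of d 1] one_mem one_notin_P localization_eq by auto

lemma v_eq_0: assumes "s \<in> D" "s \<notin> P" shows "v s = 0"
proof -
  have s0: "s \<noteq> 0" using assms zero_mem_P by auto
  have "0 \<le> v (1 / s)" using fraction_mem_localization[OF one_mem assms] localization_eq s0 by auto
  then show ?thesis using v_inverse[OF s0] v_nonneg[OF assms(1) s0] by simp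
qed

lemma v_pos: assumes "p \<in> P" "p \<noteq> 0" shows "1 \<le> v p"
proof (rule ccontr)
  assume "\<not> 1 \<le> v p"
  then have "v (1 / p) = 0" using v_inverse v_nonneg assms P_subset_carrier by force
  then have "1 / p \<in> localization D P" using localization_eq by simp
  then obtain c s where cs: "c \<in> D" "s \<in> D" "s \<notin> P" "s \<noteq> 0" "1 / p = c / s"
    by (rule localization_fraction)
  then have "s = p * c" using assms(2) by (simp add: frac_eq_eq)
  then show False using submod_mult_right[OF submod_P cs(1) assms(1)] cs(3) by simp
qed

lemma local_dvd_of_v_le:
  assumes "z \<in> D" "z \<noteq> 0" "a \<noteq> 0" "v a \<le> v z"
  shows "\<exists>s\<in>D. s \<notin> P \<and> (\<exists>c\<in>D. z * s = a * c)"
proof -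
  have "v (z * (1 / a)) = v z - v a" using v_mult[of z "1 / a"] v_inverse assms by simp
  then have "z / a \<in> localization D P" using localization_eq assms by simp
  then obtain c s where cs: "c \<in> D" "s \<in> D" "s \<notin> P" "s \<noteq> 0" "z / a = c / s"
    by (rule localization_fraction)
  then have "z * s = a * c" using assms by (simp add: frac_eq_eq mult.commute)
  then show ?thesis using cs by blast
qed

definition val_ideal :: "nat \<Rightarrow> 'a set" where
  "val_ideal m = {z \<in> D. z = 0 \<or> int m \<le> v z}"

lemma submod_val_ideal: "submod D (val_ideal m)"
  unfolding submod_def
proof (intro conjI ballI)
  show "0 \<in> val_ideal m" using zero_mem unfolding val_ideal_def by simp
next
  fix x y assume x: "x \<in> val_ideal m" and y: "y \<in> val_ideal m"
  show "x + y \<in> val_ideal m"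
  proof (cases "x = 0 \<or> y = 0 \<or> x + y = 0")
    case True
    then show ?thesis using x y add_mem unfolding val_ideal_def by auto
  next
    case False
    then show ?thesis using v_add[of x y] x y add_mem unfolding val_ideal_def by auto
  qed
next
  fix d x assume d: "d \<in> D" and x: "x \<in> val_ideal m"
  show "d * x \<in> val_ideal m"
  proof (cases "d = 0 \<or> x = 0")
    case True
    then show ?thesis using zero_mem unfolding val_ideal_def by auto
  next
    case False
    then show ?thesis
      using v_mult[of d x] v_nonneg[OF d] x d mult_mem unfolding val_ideal_def by auto
  qed
qed

lemma P_pow_subset_val_ideal: "P_pow m \<subseteq> val_ideal m"
proof (induction m)
  case 0
  then show ?case using ideal_power_0 v_nonneg unfolding val_ideal_def by auto
next
  case (Suc m)
  show ?case unfolding ideal_power_Suc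
  proof (rule ideal_prod_subset[OF submod_val_ideal])
    fix p y assume p: "p \<in> P" and "y \<in> P_pow m"
    then have y: "y \<in> val_ideal m" using Suc by blast
    have "p * y \<in> D" using p y P_subset_carrier mult_mem unfolding val_ideal_def by blast
    then show "p * y \<in> val_ideal (Suc m)"
      using v_mult[of p y] v_pos[OF p] y unfolding val_ideal_def by (cases "p = 0 \<or> y = 0") auto
  qed
qed

lemma val_ideal_subset_homog:
  assumes H: "star_homog D st I" and IP: "I \<subseteq> P" and a: "a \<in> I" "a \<noteq> 0"
  shows "val_ideal (nat (v a)) \<subseteq> I"
proof
  note fI = integral_star_idealD[OF star_homogD(1)[OF H]]
  fix z assume "z \<in> val_ideal (nat (v a))"
  then have z: "z \<in> D" "z = 0 \<or> v a \<le> v z"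
    using v_nonneg[of a] a fI(2) unfolding val_ideal_def by auto
  show "z \<in> I"
  proof (cases "z = 0")
    case True
    then show ?thesis using submod_zero[OF fI(4)] by simp
  next
    case False
    then obtain s c where sc: "s \<in> D" "s \<notin> P" "c \<in> D" "z * s = a * c"
      using local_dvd_of_v_le[OF z(1) False a(2)] z(2) by blast
    then have "z * s \<in> I" using submod_mult_right[OF fI(4) sc(3) a(1)] by simp
    then show ?thesis using star_homog_saturated[OF H max_P IP z(1) sc(1,2)] by blast
  qed
qed

lemma star_P_pow_prod_eq_carrier:
  assumes fI: "frac_ideal D I" and ID: "I \<subseteq> D" and fQ: "frac_ideal D Q"
    and IQ: "st (ideal_prod I Q) = D" and PnI: "P_pow n \<subseteq> I"
    and u: "u \<in> P" "u \<noteq> 0" "v u = 1" and q: "q \<in> Q" "q \<noteq> 0" "v q = - int n"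
  shows "st (ideal_prod (P_pow n) Q) = D"
proof -
  let ?PQ = "ideal_prod (P_pow n) Q"
  have fPQ: "frac_ideal D ?PQ" using frac_ideal_prod[OF frac_ideal_P_pow fQ] .
  have IQD: "ideal_prod I Q \<subseteq> D" using star_extensive[OF frac_ideal_prod[OF fI fQ]] IQ by simp
  have PQD: "?PQ \<subseteq> D" using ideal_prod_mono[OF PnI order_refl] IQD by blast
  show ?thesis
  proof (rule star_eq_carrier_if_no_max_above[OF fPQ PQD])
    fix M assume M: "max_star_ideal D st M" "?PQ \<subseteq> M"
    show False
    proof (cases "M = P")
      case True
      have "u ^ n * q \<in> ?PQ" using ideal_prod_mult_mem[OF power_mem_ideal_power[OF u(1)] q(1)] .
      then have "u ^ n * q \<in> P" using M(2) True by blast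
      moreover have "v (u ^ n * q) = 0" using v_mult[of "u ^ n" q] v_power u q by simp
      ultimately show False using v_pos u q by fastforce
    next
      case False
      note fM = integral_star_idealD[OF max_star_idealD(1)[OF M(1)]]
      have "\<not> P \<subseteq> M" using max_star_idealD(3)[OF max_P max_star_idealD(1,2)[OF M(1)]] False by blast
      then obtain p where p: "p \<in> P" "p \<notin> M" by blast
      have pD: "p \<in> D" and pn0: "p ^ n \<noteq> 0" using p P_subset_carrier submod_zero[OF fM(4)] by auto
      have "smult (p ^ n) Q \<subseteq> M"
        using smult_subset_ideal_prod[OF power_mem_ideal_power[OF p(1)]] M(2) by blast
      then have "ideal_prod I (smult (p ^ n) Q) \<subseteq> M"
        using ideal_prod_subset[OF fM(4)] ID submod_mult_left[OF fM(4)] by (metis subsetD)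
      then have "smult (p ^ n) (ideal_prod I Q) \<subseteq> M" using ideal_prod_smult_right[OF pn0] by simp
      then have "p ^ n \<in> st M"
        using mem_star_of_smult_subset[OF frac_ideal_prod[OF fI fQ] IQ power_mem[OF pD] pn0 fM(1)]
        by blast
      then show False
        using fM(3) prime_ideal_power_mem[OF max_star_ideal_prime[OF M(1)] pD] p(2) by simp
    qed
  qed
qed

text \<open>Choosing \<open>a \<in> I\<close>, \<open>q \<in> Q\<close> with \<open>a q \<notin> P\<close> gives \<open>v a = - v q = n\<close>, so \<open>P\<^sup>n \<subseteq> I\<close>
  and \<open>P\<^sup>n\<close> has the same \<open>\<star>\<close>-inverse \<open>Q\<close> as \<open>I\<close>.\<close>
lemma star_homog_type2_of_invertible:
  assumes H: "star_homog D st I" and IP: "I \<subseteq> P"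
    and fQ: "frac_ideal D Q" and IQ: "st (ideal_prod I Q) = D"
  shows "star_homog_type2 D st I"
proof -
  note fI = integral_star_idealD[OF star_homogD(1)[OF H]]
  have fIQ: "frac_ideal D (ideal_prod I Q)" using frac_ideal_prod[OF fI(1) fQ] .
  have IQD: "ideal_prod I Q \<subseteq> D" using star_extensive[OF fIQ] IQ by simp
  have "\<not> ideal_prod I Q \<subseteq> P"
    using star_mono[OF fIQ frac_ideal_P] IQ star_P one_notin_P one_mem by blast
  then obtain a q where aq: "a \<in> I" "q \<in> Q" "a * q \<notin> P"
    using ideal_prod_subset[OF submod_P] by blast
  have a0: "a \<noteq> 0" and q0: "q \<noteq> 0" using aq zero_mem_P by auto
  have vaq: "v a + v q = 0"
    using v_mult[OF a0 q0] v_eq_0 ideal_prod_mult_mem[OF aq(1,2)] IQD aq(3) by auto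
  define n where "n = nat (v a)"
  have n: "int n = v a" "0 < n" using v_pos[OF _ a0] aq(1) IP unfolding n_def by auto
  have PnI: "P_pow n \<subseteq> I"
    using P_pow_subset_val_ideal val_ideal_subset_homog[OF H IP aq(1) a0] unfolding n_def by blast
  obtain u where u: "u \<noteq> 0" "v u = 1" "u \<in> localization D P"
    using v_surj[of 1] localization_eq by auto
  obtain b s where bs: "b \<in> D" "s \<in> D" "s \<notin> P" "s \<noteq> 0" "u = b / s"
    using localization_fraction[OF u(3)] .
  have b0: "b \<noteq> 0" and vb: "v b = 1"
    using bs u v_mult[of u s] v_eq_0[OF bs(2,3)] by (auto simp: field_simps)
  have "b \<in> P" using vb v_eq_0 bs(1) by fastforce
  then have "st (ideal_prod (P_pow n) Q) = D"
    using star_P_pow_prod_eq_carrier[OF fI(1,2) fQ IQ PnI _ b0 vb aq(2) q0] vaq n by simp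
  then have "I = st (P_pow n)"
    using star_eq_of_common_inverse[OF fI(1) frac_ideal_P_pow fQ IQ] fI(3) by simp
  then have "I = st (ideal_power D (M_of D st I) n)" using M_of_eq[OF H max_P IP] by simp
  then show ?thesis unfolding star_homog_type2_def using H n(2) by blast
qed

end

context star_op
begin

lemma factor_of_principal_star_invertible:
  assumes Is: "\<forall>J\<in>set Is. integral_star_ideal D st J" "principal D x = st (prod_ideals D Is)"
    and x: "x \<in> D" "x \<noteq> 0" and I: "I \<in> set Is"
  shows "\<exists>Q. frac_ideal D Q \<and> st (ideal_prod I Q) = D"
proof -
  have fIs: "\<forall>J\<in>set Is. frac_ideal D J \<and> J \<subseteq> D" using Is(1) integral_star_idealD by blast
  let ?R = "prod_ideals D (remove1 I Is)"
  have fR: "frac_ideal D ?R" using frac_ideal_prod_ideals fIs by (meson notin_set_remove1)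
  have fI: "frac_ideal D I" using fIs I by blast
  have "prod_ideals D Is = ideal_prod I ?R"
    using prod_ideals_remove1 fIs frac_ideal_submod I by blast
  then have "st (ideal_prod I (smult (1 / x) ?R)) = smult (1 / x) (principal D x)"
    using ideal_prod_smult_right[of "1 / x" I ?R] star_smult[of "1 / x"] x Is(2)
      frac_ideal_prod[OF fI fR] by simp
  also have "\<dots> = D" using smult_principal[of "1 / x" x] x principal_one by simp
  finally have "st (ideal_prod I (smult (1 / x) ?R)) = D" .
  moreover have "frac_ideal D (smult (1 / x) ?R)" using frac_ideal_smult[OF fR _ x] x one_mem by simp
  ultimately show ?thesis by blast
qed

lemma star_homog_type2_of_star_Krull:
  assumes K: "star_Krull D st" and H: "star_homog D st I"
    and fQ: "frac_ideal D Q" and IQ: "st (ideal_prod I Q) = D"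
  shows "star_homog_type2 D st I"
proof -
  obtain P where P: "max_star_ideal D st P" "I \<subseteq> P"
    using exists_max_star_ideal star_homogD(1,3)[OF H] by blast
  have "is_DVR (localization D P)" using K P(1) unfolding star_Krull_def by blast
  then obtain v :: "'a \<Rightarrow> int" where v:
    "\<forall>x y. x \<noteq> 0 \<and> y \<noteq> 0 \<longrightarrow> v (x * y) = v x + v y"
    "\<forall>x y. x \<noteq> 0 \<and> y \<noteq> 0 \<and> x + y \<noteq> 0 \<longrightarrow> min (v x) (v y) \<le> v (x + y)"
    "\<forall>n. \<exists>x. x \<noteq> 0 \<and> v x = n" "localization D P = {x. x = 0 \<or> 0 \<le> v x}"
    unfolding is_DVR_def by blast
  interpret star_DVR_at_max D st P v
  proof
    show "max_star_ideal D st P" using P(1) .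
  qed (use v in blast)+
  show ?thesis using star_homog_type2_of_invertible[OF H P(2) fQ IQ] .
qed

lemma star_Krull_imp_star_SH_type2:
  assumes K: "star_Krull D st"
  shows "star_SH_type2 D st"
  unfolding star_SH_type2_def
proof (intro ballI impI)
  fix x assume x: "x \<in> D" "x \<noteq> 0 \<and> \<not> is_unit_in D x"
  have "star_SH D st" using K unfolding star_Krull_def star_weakly_Krull_def by blast
  then obtain Is where Is: "Is \<noteq> []" "\<forall>I\<in>set Is. star_homog D st I" "principal D x = st (prod_ideals D Is)"
    using x unfolding star_SH_def by blast
  have "star_homog_type2 D st I" if I: "I \<in> set Is" for I
  proof -
    have "\<forall>J\<in>set Is. integral_star_ideal D st J" using Is(2) star_homogD(1) by blast
    then obtain Q where "frac_ideal D Q" "st (ideal_prod I Q) = D"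
      using factor_of_principal_star_invertible[OF _ Is(3) x(1) _ I] x(2) by blast
    then show ?thesis using star_homog_type2_of_star_Krull[OF K] Is(2) I by blast
  qed
  then show "\<exists>Is. Is \<noteq> [] \<and> (\<forall>I\<in>set Is. star_homog_type2 D st I) \<and> principal D x = st (prod_ideals D Is)"
    using Is by blast
qed

lemma star_SH_type2_imp_star_SH: "star_SH_type2 D st \<Longrightarrow> star_SH D st"
  unfolding star_SH_type2_def star_SH_def star_homog_type2_def by meson

lemma star_SH_type2_imp_star_Krull:
  assumes "is_quotient_field D" and "star_SH_type2 D st"
  shows "star_Krull D st"
proof -
  have "height_one D P \<and> is_DVR (localization D P)" if "max_star_ideal D st P" for P
  proof -
    interpret star_SH_type2_at_max_qf D st P
      by unfold_locales (fact subdomain star_operation finite_character that assms)+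
    show ?thesis using height_one localization_DVR by blast
  qed
  then show ?thesis
    unfolding star_Krull_def star_weakly_Krull_def using star_SH_type2_imp_star_SH assms(2) by blast
qed

end

theorem theoremP4:
  fixes D :: "('a::field) set" and st :: "'a set \<Rightarrow> 'a set"
  assumes "subdomain D" and "is_quotient_field D"
    and "star_operation D st" and "finite_character D st"
  shows "star_SH_type2 D st \<longleftrightarrow> star_Krull D st"
proof -
  interpret star_op D st
    by unfold_locales (fact assms)+
  show ?thesis
    using star_SH_type2_imp_star_Krull[OF assms(2)] star_Krull_imp_star_SH_type2 by blast
qed

end
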